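(* Let $(y_1,x_1),\dots,(y_\ell,x_\ell)\in\mathbb{R}^3\times\mathbb{R}^3$, $c_1^2,\dots,c_\ell^2\ge0$, and $k^*\in\{0,\dots,\ell\}$. Suppose (TLS-Q) preserves all inliers $Q_1,\dots,Q_{k^*}$ and rejects all outliers $Q_{k^*+1},\dots,Q_\ell$, in the sense that there is a global minimizer $\hat w_0\in\mathbb{S}^3$ of (TLS-Q) with $\hat w_0^\top Q_i\hat w_0\le c_i^2$ for $i\le k^*$ and $\hat w_0^\top Q_j\hat w_0\ge c_j^2$ for $j>k^*$. Then (SDR) is tight if and only if there exist $\hat\mu\in\mathbb{R}$ and an admissible dual matrix $\hat{\mathcal{D}}$ satisfying: (O1) $\big(2[\hat{\mathcal{D}}]_{0i}+Q_i-c_i^2I_4\big)\hat w_0=0$ for all $i\in\{1,\dots,k^*\}$, and $\big(2[\hat{\mathcal{D}}]_{0j}+c_j^2I_4-Q_j\big)\hat w_0=0$ for all $j\in\{k^*+1,\dots,\ell\}$; (O2) $-\hat\mu\|z_0\|_2^2+2\sum_{i=1}^\ell z_i^\top[\hat{\mathcal{D}}]_{0i}z_i-\sum_{i=1}^\ell z_0^\top\big(2[\hat{\mathcal{D}}]_{0i}-Q_i+c_i^2I_4\big)z_i\ge0$ for all $z_0,\dots,z_\ell\in\mathbb{R}^4$; (O3) $\hat\mu=\sum_{i=1}^{k^*}\big(\hat w_0^\top Q_i\hat w_0-c_i^2\big)$.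
   Context: For $w\in\mathbb{S}^3$, $R(w)\in SO(3)$ is the rotation given by the unit quaternion $w=[w_1;w_2;w_3;w_4]$: $R(w)=\begin{bmatrix} w_1^2+w_2^2-w_3^2-w_4^2 & 2(w_2w_3-w_1w_4) & 2(w_2w_4+w_1w_3)\\ 2(w_2w_3+w_1w_4) & w_1^2+w_3^2-w_2^2-w_4^2 & 2(w_3w_4-w_1w_2)\\ 2(w_2w_4-w_1w_3) & 2(w_3w_4+w_1w_2) & w_1^2+w_4^2-w_2^2-w_3^2\end{bmatrix}$. $Q_i$ is the unique symmetric $4\times4$ matrix with $w^\top Q_iw=\|y_i-R(w)x_i\|_2^2$ for all $w\in\mathbb{S}^3$. (TLS-Q) is $\min_{w_0\in\mathbb{S}^3}\sum_{i=1}^\ell\min\{w_0^\top Q_iw_0,\,c_i^2\}$. For $\mathcal{A}\in\mathbb{R}^{4(\ell+1)\times4(\ell+1)}$, $[\mathcal{A}]_{ij}$ ($0\le i,j\le\ell$) is the $4\times4$ block in rows $4i+1..4i+4$, columns $4j+1..4j+4$. $\mathcal{Q}$ is symmetric with $[\mathcal{Q}]_{0i}=[\mathcal{Q}]_{i0}=\frac12(Q_i-c_i^2I_4)$ ($i\ge1$), other blocks zero. (QCQP): minimize $\operatorname{tr}(\mathcal{Q}\omega\omega^\top)+\sum_ic_i^2$ over $\omega\in\mathbb{R}^{4(\ell+1)}$ s.t. $[\omega\omega^\top]_{0i}=[\omega\omega^\top]_{ii}$ ($i=1..\ell$), $\operatorname{tr}([\omega\omega^\top]_{00})=1$. (SDR):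 minimize $\operatorname{tr}(\mathcal{Q}\mathcal{W})+\sum_ic_i^2$ over symmetric $\mathcal{W}\succeq0$ s.t. $[\mathcal{W}]_{0i}=[\mathcal{W}]_{ii}$ ($i=1..\ell$), $\operatorname{tr}([\mathcal{W}]_{00})=1$. (SDR) is tight if it admits $\hat\omega\hat\omega^\top$ as a global minimizer, where $\hat\omega$ is a global minimizer of (QCQP). An admissible dual matrix is a symmetric $\mathcal{D}\in\mathbb{R}^{4(\ell+1)\times4(\ell+1)}$ with $[\mathcal{D}]_{ii}+2[\mathcal{D}]_{0i}=0$ for $i=1,\dots,\ell$ and all blocks other than $[\mathcal{D}]_{ii},[\mathcal{D}]_{0i},[\mathcal{D}]_{i0}$ ($i\ge1$) equal to zero. *)

theory Defs
  imports "HOL-Analysis.Analysis"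
begin

text \<open>Quaternion components: for w :: real^4 we write w$1, w$2, w$3, w$4
  for w_1..w_4 (in the numeral type 4 the index 4 is the fourth element).\<close>

definition rotq :: "real^4 \<Rightarrow> real^3^3" where
  "rotq w = vector [
     vector [(w$1)^2 + (w$2)^2 - (w$3)^2 - (w$4)^2, 2*(w$2*w$3 - w$1*w$4), 2*(w$2*w$4 + w$1*w$3)],
     vector [2*(w$2*w$3 + w$1*w$4), (w$1)^2 + (w$3)^2 - (w$2)^2 - (w$4)^2, 2*(w$3*w$4 - w$1*w$2)],
     vector [2*(w$2*w$4 - w$1*w$3), 2*(w$3*w$4 + w$1*w$2), (w$1)^2 + (w$4)^2 - (w$2)^2 - (w$3)^2]]"

definition Qmat :: "real^3 \<Rightarrow> real^3 \<Rightarrow> real^4^4" where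
  "Qmat y x = (THE Q. transpose Q = Q \<and>
      (\<forall>w::real^4. norm w = 1 \<longrightarrow> w \<bullet> (Q *v w) = (norm (y - rotq w *v x))^2))"

definition tls_obj :: "nat \<Rightarrow> (nat \<Rightarrow> real^3) \<Rightarrow> (nat \<Rightarrow> real^3) \<Rightarrow> (nat \<Rightarrow> real) \<Rightarrow> real^4 \<Rightarrow> real" where
  "tls_obj l y x c2 w = (\<Sum>i=1..l. min (w \<bullet> (Qmat (y i) (x i) *v w)) (c2 i))"

definition tls_global_min :: "nat \<Rightarrow> (nat \<Rightarrow> real^3) \<Rightarrow> (nat \<Rightarrow> real^3) \<Rightarrow> (nat \<Rightarrow> real) \<Rightarrow> real^4 \<Rightarrow> bool" where
  "tls_global_min l y x c2 w0 \<longleftrightarrow> norm w0 = 1 \<and>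
     (\<forall>w. norm w = 1 \<longrightarrow> tls_obj l y x c2 w0 \<le> tls_obj l y x c2 w)"

text \<open>A 4(l+1) x 4(l+1) matrix is represented by its 4x4 blocks
  A i j (0 \<le> i, j \<le> l); a vector in R^{4(l+1)} by its 4-blocks z 0, ..., z l.
  Values outside the index range 0..l are irrelevant.\<close>

definition block_sym :: "nat \<Rightarrow> (nat \<Rightarrow> nat \<Rightarrow> real^4^4) \<Rightarrow> bool" where
  "block_sym l A \<longleftrightarrow> (\<forall>i\<le>l. \<forall>j\<le>l. A j i = transpose (A i j))"

definition block_psd :: "nat \<Rightarrow> (nat \<Rightarrow> nat \<Rightarrow> real^4^4) \<Rightarrow> bool" where
  "block_psd l A \<longleftrightarrow> block_sym l A \<and>
     (\<forall>z :: nat \<Rightarrow> real^4. 0 \<le> (\<Sum>i\<le>l. \<Sum>j\<le>l. z i \<bullet> (A i j *v z j)))"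

definition block_trprod :: "nat \<Rightarrow> (nat \<Rightarrow> nat \<Rightarrow> real^4^4) \<Rightarrow> (nat \<Rightarrow> nat \<Rightarrow> real^4^4) \<Rightarrow> real" where
  "block_trprod l A B = (\<Sum>i\<le>l. \<Sum>j\<le>l. trace (A i j ** B j i))"

definition outer_blocks :: "(nat \<Rightarrow> real^4) \<Rightarrow> nat \<Rightarrow> nat \<Rightarrow> real^4^4" where
  "outer_blocks om i j = (\<chi> a b. om i $ a * om j $ b)"

definition bigQ :: "nat \<Rightarrow> (nat \<Rightarrow> real^3) \<Rightarrow> (nat \<Rightarrow> real^3) \<Rightarrow> (nat \<Rightarrow> real) \<Rightarrow> nat \<Rightarrow> nat \<Rightarrow> real^4^4" where
  "bigQ l y x c2 i j =
     (if i = 0 \<and> 1 \<le> j \<and> j \<le> l then (1/2) *\<^sub>R (Qmat (y j) (x j) - c2 j *\<^sub>R mat 1)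
      else if j = 0 \<and> 1 \<le> i \<and> i \<le> l then (1/2) *\<^sub>R (Qmat (y i) (x i) - c2 i *\<^sub>R mat 1)
      else 0)"

definition relax_obj :: "nat \<Rightarrow> (nat \<Rightarrow> real^3) \<Rightarrow> (nat \<Rightarrow> real^3) \<Rightarrow> (nat \<Rightarrow> real) \<Rightarrow> (nat \<Rightarrow> nat \<Rightarrow> real^4^4) \<Rightarrow> real" where
  "relax_obj l y x c2 W = block_trprod l (bigQ l y x c2) W + (\<Sum>i=1..l. c2 i)"

definition qcqp_feasible :: "nat \<Rightarrow> (nat \<Rightarrow> real^4) \<Rightarrow> bool" where
  "qcqp_feasible l om \<longleftrightarrow>
     (\<forall>i\<in>{1..l}. outer_blocks om 0 i = outer_blocks om i i) \<and> trace (outer_blocks om 0 0) = 1"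

definition qcqp_global_min :: "nat \<Rightarrow> (nat \<Rightarrow> real^3) \<Rightarrow> (nat \<Rightarrow> real^3) \<Rightarrow> (nat \<Rightarrow> real) \<Rightarrow> (nat \<Rightarrow> real^4) \<Rightarrow> bool" where
  "qcqp_global_min l y x c2 om \<longleftrightarrow> qcqp_feasible l om \<and>
     (\<forall>om'. qcqp_feasible l om' \<longrightarrow>
        relax_obj l y x c2 (outer_blocks om) \<le> relax_obj l y x c2 (outer_blocks om'))"

definition sdr_feasible :: "nat \<Rightarrow> (nat \<Rightarrow> nat \<Rightarrow> real^4^4) \<Rightarrow> bool" where
  "sdr_feasible l W \<longleftrightarrow> block_psd l W \<and>
     (\<forall>i\<in>{1..l}. W 0 i = W i i) \<and> trace (W 0 0) = 1"

definition sdr_global_min :: "nat \<Rightarrow> (nat \<Rightarrow> real^3) \<Rightarrow> (nat \<Rightarrow> real^3) \<Rightarrow> (nat \<Rightarrow> real) \<Rightarrow> (nat \<Rightarrow> nat \<Rightarrow> real^4^4) \<Rightarrow> bool" where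
  "sdr_global_min l y x c2 W \<longleftrightarrow> sdr_feasible l W \<and>
     (\<forall>W'. sdr_feasible l W' \<longrightarrow> relax_obj l y x c2 W \<le> relax_obj l y x c2 W')"

definition sdr_tight :: "nat \<Rightarrow> (nat \<Rightarrow> real^3) \<Rightarrow> (nat \<Rightarrow> real^3) \<Rightarrow> (nat \<Rightarrow> real) \<Rightarrow> bool" where
  "sdr_tight l y x c2 \<longleftrightarrow>
     (\<exists>om. qcqp_global_min l y x c2 om \<and> sdr_global_min l y x c2 (outer_blocks om))"

definition admissible_dual :: "nat \<Rightarrow> (nat \<Rightarrow> nat \<Rightarrow> real^4^4) \<Rightarrow> bool" where
  "admissible_dual l D \<longleftrightarrow> block_sym l D \<and>
     (\<forall>i\<in>{1..l}. D i i + 2 *\<^sub>R D 0 i = 0) \<and>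
     (\<forall>i\<le>l. \<forall>j\<le>l. \<not> (1 \<le> i \<and> (j = i \<or> j = 0)) \<and> \<not> (i = 0 \<and> 1 \<le> j) \<longrightarrow> D i j = 0)"

end

(*
  Sufficiency is weak duality. Condition (O2) says that the slack matrix Q - D - mu E_00 is positive
  semidefinite as a quadratic form, so its trace pairing with every feasible W of (SDR) is nonnegative.
  For an admissible D this pairing is tr(Q W) - mu, hence every value of (SDR) is at least
  mu + sum_i c_i^2, and by (O3) the QCQP point that repeats w0 in the inlier blocks and vanishes in the
  outlier blocks attains this bound.

  Necessity is strong duality for a reduced problem. Write H_i = Q_i - c_i^2 I. For W positive definite
  and 0 <= Y_i <= W in the Loewner order, a Schur complement completes W_00 = W, W_0i = W_ii = Y_i to a
  feasible point of (SDR) of value sum_i H_i . Y_i / tr W + sum_i c_i^2; by tightness and the optimality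
  of w0 for (TLS-Q) this is at least mu + sum_i c_i^2. Separating -mu I from the closed convex set of
  sums P + sum_i R_i with P >= 0, R_i >= 0, R_i + H_i >= 0 then produces such multipliers with
  -mu I = P + sum_i R_i. The matrix with [D]_0i = H_i/2 + R_i satisfies (O2), and (O1) is complementary
  slackness at w0.
*)

theory Submission
  imports Defs
begin

lemma vector_4 [simp]:
  "(vector [a, b, c, d] :: 'a::zero^4) $ 1 = a"
  "(vector [a, b, c, d] :: 'a::zero^4) $ 2 = b"
  "(vector [a, b, c, d] :: 'a::zero^4) $ 3 = c"
  "(vector [a, b, c, d] :: 'a::zero^4) $ 4 = d"
  unfolding vector_def by simp_all

lemma transpose_add: "transpose (A + B) = transpose A + transpose (B :: 'a::ab_group_add^'n^'m)"
  by (simp add: transpose_def vec_eq_iff)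

lemma transpose_diff: "transpose (A - B) = transpose A - transpose (B :: 'a::ab_group_add^'n^'m)"
  by (simp add: transpose_def vec_eq_iff)

lemma transpose_uminus [simp]: "transpose (- A) = - transpose (A :: 'a::ab_group_add^'n^'m)"
  by (simp add: transpose_def vec_eq_iff)

lemma transpose_zero [simp]: "transpose (0 :: 'a::zero^'n^'m) = 0"
  by (simp add: transpose_def vec_eq_iff)

lemma inner_matrix: "inner (A :: real^'n^'m) B = (\<Sum>p\<in>UNIV. \<Sum>q\<in>UNIV. A $ p $ q * B $ p $ q)"
  by (simp add: inner_vec_def)

lemma inner_transpose: "inner (A :: real^'n^'m) (transpose B) = inner (transpose A) B"
  by (simp add: inner_matrix transpose_def) (rule sum.swap)

lemma trace_eq_inner_mat_1: "trace (A :: real^'n^'n) = inner A (mat 1)"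
  by (simp add: trace_def inner_matrix mat_def if_distrib cong: if_cong)

lemma trace_scaleR: "trace (c *\<^sub>R (A :: real^'n^'n)) = c * trace A"
  by (simp add: trace_eq_inner_mat_1)

lemma trace_matrix_mult: "trace ((A :: real^'n^'n) ** B) = inner A (transpose B)"
  by (simp add: trace_def matrix_matrix_mult_def inner_matrix transpose_def)

lemma inner_vector_matrix: "u \<bullet> (v v* M) = v \<bullet> (M *v (u :: real^'n))"
  by (metis dot_lmul_matrix inner_commute)

lemma symmetric_bilinear: "transpose M = M \<Longrightarrow> u \<bullet> (M *v v) = v \<bullet> (M *v (u :: real^'n))"
  by (metis inner_vector_matrix transpose_matrix_vector)

lemma matrix_vector_mult_sum: "(A :: real^'n^'m) *v (\<Sum>i\<in>S. f i) = (\<Sum>i\<in>S. A *v f i)"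
  by (induct S rule: infinite_finite_induct) (auto simp: matrix_vector_right_distrib)

lemma sum_matrix_vector_mult: "(\<Sum>i\<in>S. A i) *v v = (\<Sum>i\<in>S. A i *v (v :: real^'n))"
  by (induct S rule: infinite_finite_induct) (simp_all add: matrix_vector_mult_add_rdistrib)

lemma symmetric_matrix_eqI:
  fixes A B :: "real^'n^'n"
  assumes "transpose A = A" and "transpose B = B"
    and eq: "\<And>w. norm w = 1 \<Longrightarrow> w \<bullet> (A *v w) = w \<bullet> (B *v w)"
  shows "A = B"
proof -
  define C where "C = A - B"
  have sym: "transpose C = C" using assms(1,2) by (simp add: C_def transpose_diff)
  have quad: "w \<bullet> (C *v w) = 0" for w
  proof (cases "w = 0")
    case False
    then have "(w /\<^sub>R norm w) \<bullet> (C *v (w /\<^sub>R norm w)) = 0"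
      using eq[of "w /\<^sub>R norm w"]
      by (simp add: C_def matrix_vector_mult_diff_rdistrib inner_diff_right)
    then show ?thesis using False
      by (simp add: matrix_vector_mult_scaleR)
  qed simp
  have "u \<bullet> (C *v v) = 0" for u v
    using quad[of "u + v"] quad[of u] quad[of v] symmetric_bilinear[OF sym, of u v]
    by (simp add: matrix_vector_right_distrib inner_add_left inner_add_right)
  then have "C *v v = 0" for v by (metis inner_eq_zero_iff)
  then have "C = 0" by (metis matrix_eq matrix_vector_mult_0)
  then show ?thesis by (simp add: C_def)
qed

section \<open>The TLS cost matrix\<close>

text \<open>For a unit quaternion \<open>w\<close>, \<open>w \<bullet> (quat_coupling y x *v w) = y \<bullet> (rotq w *v x)\<close>, the cross
  term of \<open>\<parallel>y - R(w) x\<parallel>\<^sup>2\<close>.\<close>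
definition quat_coupling :: "real^3 \<Rightarrow> real^3 \<Rightarrow> real^4^4" where
  "quat_coupling y x = vector [
    vector [y$1*x$1 + y$2*x$2 + y$3*x$3, y$3*x$2 - y$2*x$3, y$1*x$3 - y$3*x$1, y$2*x$1 - y$1*x$2],
    vector [y$3*x$2 - y$2*x$3, y$1*x$1 - y$2*x$2 - y$3*x$3, y$1*x$2 + y$2*x$1, y$1*x$3 + y$3*x$1],
    vector [y$1*x$3 - y$3*x$1, y$1*x$2 + y$2*x$1, - y$1*x$1 + y$2*x$2 - y$3*x$3, y$2*x$3 + y$3*x$2],
    vector [y$2*x$1 - y$1*x$2, y$1*x$3 + y$3*x$1, y$2*x$3 + y$3*x$2, - y$1*x$1 - y$2*x$2 + y$3*x$3]]"

lemma Qmat_eq: "Qmat y x = ((norm y)\<^sup>2 + (norm x)\<^sup>2) *\<^sub>R mat 1 - 2 *\<^sub>R quat_coupling y x"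
proof -
  define Q where "Q = ((norm y)\<^sup>2 + (norm x)\<^sup>2) *\<^sub>R mat 1 - 2 *\<^sub>R quat_coupling y x"
  have sym: "transpose Q = Q"
    unfolding Q_def quat_coupling_def by (simp add: vec_eq_iff forall_4 transpose_def mat_def)
  have quad: "w \<bullet> (Q *v w) = (norm (y - rotq w *v x))\<^sup>2" if "norm w = 1" for w
  proof -
    let ?s = "(w$1)\<^sup>2 + (w$2)\<^sup>2 + (w$3)\<^sup>2 + (w$4)\<^sup>2"
    have s: "?s = 1"
      using that by (simp add: norm_eq_1 inner_vec_def sum_4 power2_eq_square)
    have norm3: "(norm v)\<^sup>2 = (v$1)\<^sup>2 + (v$2)\<^sup>2 + (v$3)\<^sup>2" for v :: "real^3"
      by (simp only: power2_norm_eq_inner) (simp add: inner_vec_def sum_3 power2_eq_square)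
    have "w \<bullet> (Q *v w) - (norm (y - rotq w *v x))\<^sup>2
        = ((y$1)\<^sup>2 + (y$2)\<^sup>2 + (y$3)\<^sup>2) * (?s - 1) + ((x$1)\<^sup>2 + (x$2)\<^sup>2 + (x$3)\<^sup>2) * (?s - ?s\<^sup>2)"
      unfolding Q_def norm3
      by (simp add: quat_coupling_def rotq_def inner_vec_def sum_4 sum_3 matrix_vector_mult_def
          mat_def algebra_simps power2_eq_square)
    then show ?thesis using s by simp
  qed
  have "Qmat y x = Q"
    unfolding Qmat_def
  proof (rule the_equality)
    fix Q' :: "real^4^4"
    assume "transpose Q' = Q' \<and> (\<forall>w. norm w = 1 \<longrightarrow> w \<bullet> (Q' *v w) = (norm (y - rotq w *v x))\<^sup>2)"
    then show "Q' = Q" using symmetric_matrix_eqI[of Q' Q] sym quad by auto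
  qed (use sym quad in blast)
  then show ?thesis by (simp add: Q_def)
qed

lemma Qmat_symmetric: "transpose (Qmat y x) = Qmat y x"
  unfolding Qmat_eq quat_coupling_def by (simp add: vec_eq_iff forall_4 transpose_def mat_def)

section \<open>Positive semidefinite matrices\<close>

definition psd :: "real^'n^'n \<Rightarrow> bool" where
  "psd M \<longleftrightarrow> transpose M = M \<and> (\<forall>v. 0 \<le> v \<bullet> (M *v v))"

lemma psd_symmetric: "psd M \<Longrightarrow> transpose M = M"
  by (simp add: psd_def)

lemma psd_nonneg: "psd M \<Longrightarrow> 0 \<le> v \<bullet> (M *v v)"
  by (simp add: psd_def)

lemma psd_0 [simp]: "psd 0"
  by (simp add: psd_def)

lemma psd_mat_1: "psd (mat 1)"
  by (simp add: psd_def)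

lemma psd_add: "psd A \<Longrightarrow> psd B \<Longrightarrow> psd (A + B)"
  by (simp add: psd_def transpose_add matrix_vector_mult_add_rdistrib inner_add_right)

lemma psd_scaleR: "psd A \<Longrightarrow> 0 \<le> c \<Longrightarrow> psd (c *\<^sub>R A)"
  by (simp add: psd_def transpose_scalar scaleR_matrix_vector_assoc[symmetric])

lemma convex_psd: "convex {M. psd M}"
  unfolding convex_def by (auto intro!: psd_add psd_scaleR)

definition outer :: "real^'n \<Rightarrow> real^'n \<Rightarrow> real^'n^'n" where
  "outer u v = (\<chi> a b. u $ a * v $ b)"

lemma inner_outer: "inner M (outer u v) = u \<bullet> (M *v v)"
  by (simp add: inner_matrix outer_def inner_vec_def matrix_vector_mult_def sum_distrib_left
      algebra_simps)

lemma psd_outer: "psd (outer v v)"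
proof -
  have "u \<bullet> (outer v v *v u) = (v \<bullet> u)\<^sup>2" for u
    by (simp add: outer_def inner_vec_def matrix_vector_mult_def power2_eq_square sum_distrib_left
        sum_distrib_right algebra_simps)
  moreover have "transpose (outer v v) = outer v v"
    by (simp add: outer_def transpose_def vec_eq_iff mult.commute)
  ultimately show ?thesis by (simp add: psd_def)
qed

lemma closed_psd: "closed {M :: real^'n^'n. psd M}"
proof -
  have "{M :: real^'n^'n. psd M} =
      (\<Inter>p. \<Inter>q. {M. M $ q $ p = M $ p $ q}) \<inter> (\<Inter>v. {M. 0 \<le> inner M (outer v v)})"
    by (auto simp: psd_def inner_outer transpose_def vec_eq_iff)
  then show ?thesis
    by (simp only:) (intro closed_Int closed_INT ballI closed_Collect_eq closed_Collect_le
        continuous_intros)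
qed

lemma quadratic_add_scaleR:
  "(u + t *\<^sub>R v) \<bullet> (M *v (u + t *\<^sub>R v))
     = u \<bullet> (M *v u) + t * (u \<bullet> (M *v v) + v \<bullet> (M *v u)) + t\<^sup>2 * (v \<bullet> (M *v v))"
  for M :: "real^'n^'n"
  by (simp add: algebra_simps power2_eq_square)

lemma psd_Cauchy_Schwarz:
  assumes "psd M"
  shows "(u \<bullet> (M *v v))\<^sup>2 \<le> (u \<bullet> (M *v u)) * (v \<bullet> (M *v v))"
proof -
  define a b c where "a = v \<bullet> (M *v v)" and "b = u \<bullet> (M *v v)" and "c = u \<bullet> (M *v u)"
  have quad: "0 \<le> c + 2 * t * b + t\<^sup>2 * a" for t
    using psd_nonneg[OF assms, of "u + t *\<^sub>R v"] symmetric_bilinear[OF psd_symmetric[OF assms], of v u]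
    unfolding quadratic_add_scaleR by (simp add: a_def b_def c_def algebra_simps)
  have "0 \<le> a" using psd_nonneg[OF assms] by (simp add: a_def)
  show ?thesis
  proof (cases "a = 0")
    case True
    have "b = 0"
    proof (rule ccontr)
      assume "b \<noteq> 0"
      have "0 \<le> c + 2 * (- (c + 1) / (2 * b)) * b" using quad[of "- (c + 1) / (2 * b)"] True by simp
      also have "\<dots> = -1" using \<open>b \<noteq> 0\<close> by (simp add: field_simps)
      finally show False by simp
    qed
    then show ?thesis using True by (simp add: a_def b_def)
  next
    case False
    with \<open>0 \<le> a\<close> have "0 < a" by simp
    have "0 \<le> c + 2 * (- b / a) * b + (- b / a)\<^sup>2 * a" using quad[of "- b / a"] .
    also have "\<dots> = c - b\<^sup>2 / a" using \<open>0 < a\<close> by (simp add: field_simps power2_eq_square)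
    finally show ?thesis using \<open>0 < a\<close> by (simp add: a_def b_def c_def field_simps)
  qed
qed

lemma psd_mult_eq_0_if_quadratic_eq_0:
  assumes "psd M" "v \<bullet> (M *v v) = 0"
  shows "M *v v = 0"
proof -
  have "(u \<bullet> (M *v v))\<^sup>2 \<le> 0" for u using psd_Cauchy_Schwarz[OF assms(1), of u v] assms(2) by simp
  then have "u \<bullet> (M *v v) = 0" for u by simp
  then show ?thesis using inner_eq_zero_iff by blast
qed

lemma inner_axis_matrix: "(axis p 1 :: real^'n) \<bullet> (M *v axis q 1) = M $ p $ q"
  by (simp add: inner_axis' matrix_vector_mult_basis column_def)

lemma psd_diagonal_nonneg: "psd M \<Longrightarrow> 0 \<le> M $ p $ p"
  by (metis psd_nonneg inner_axis_matrix)

lemma psd_trace_nonneg: "psd M \<Longrightarrow> 0 \<le> trace M"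
  unfolding trace_def by (auto intro!: sum_nonneg psd_diagonal_nonneg)

lemma psd_entry_bound:
  assumes "psd M"
  shows "\<bar>M $ p $ q\<bar> \<le> trace M"
proof -
  have "(M $ p $ q)\<^sup>2 \<le> M $ p $ p * M $ q $ q"
    using psd_Cauchy_Schwarz[OF assms, of "axis p 1" "axis q 1"] by (simp add: inner_axis_matrix)
  also have "\<dots> \<le> trace M * trace M"
    using psd_diagonal_nonneg[OF assms]
    by (intro mult_mono) (auto simp: trace_def intro!: member_le_sum sum_nonneg)
  finally show ?thesis using psd_trace_nonneg[OF assms]
    by (metis power2_abs power2_eq_square power2_le_imp_le)
qed

lemma psd_norm_bound:
  assumes "psd (M :: real^'n^'n)"
  shows "norm M \<le> real CARD('n) ^ 2 * trace M"
proof -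
  have "norm M \<le> (\<Sum>p\<in>UNIV. norm (M $ p))" by (simp add: norm_vec_def L2_set_le_sum)
  also have "\<dots> \<le> (\<Sum>p\<in>UNIV. \<Sum>q\<in>UNIV. \<bar>M $ p $ q\<bar>)"
    by (intro sum_mono) (simp add: norm_le_l1_cart)
  also have "\<dots> \<le> (\<Sum>p\<in>(UNIV :: 'n set). \<Sum>q\<in>(UNIV :: 'n set). trace M)"
    by (intro sum_mono psd_entry_bound[OF assms])
  finally show ?thesis by (simp add: power2_eq_square)
qed

definition positive_definite :: "real^'n^'n \<Rightarrow> bool" where
  "positive_definite M \<longleftrightarrow> transpose M = M \<and> (\<forall>v. v \<noteq> 0 \<longrightarrow> 0 < v \<bullet> (M *v v))"

lemma positive_definite_imp_psd: "positive_definite M \<Longrightarrow> psd M"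
  unfolding positive_definite_def psd_def by (metis inner_zero_left order.refl order_less_imp_le)

lemma positive_definite_trace_pos: "positive_definite M \<Longrightarrow> 0 < trace M"
  unfolding positive_definite_def trace_def
  by (auto intro!: sum_pos simp flip: inner_axis_matrix)

lemma positive_definite_scaleR: "positive_definite M \<Longrightarrow> 0 < c \<Longrightarrow> positive_definite (c *\<^sub>R M)"
  by (simp add: positive_definite_def transpose_scalar scaleR_matrix_vector_assoc[symmetric])

lemma positive_definite_inverse:
  assumes "positive_definite (W :: real^'n^'n)"
  obtains B where "W ** B = mat 1" "transpose B = B"
proof -
  have "W *v x = 0 \<Longrightarrow> x = 0" for x
    using assms unfolding positive_definite_def by (metis inner_zero_right less_irrefl)
  then obtain B where BW: "B ** W = mat 1" using matrix_left_invertible_ker by blast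
  then have WB: "W ** B = mat 1" using matrix_left_right_inverse by blast
  have "W ** transpose B = mat 1"
    using arg_cong[OF BW, of transpose] assms
    by (simp add: matrix_transpose_mul positive_definite_def)
  then have "transpose B = B" by (metis BW matrix_mul_assoc matrix_mul_lid matrix_mul_rid)
  with WB show ?thesis by (rule that)
qed

definition symmetric_part :: "real^'n^'n \<Rightarrow> real^'n^'n" where
  "symmetric_part A = (1/2) *\<^sub>R (A + transpose A)"

lemma symmetric_part_symmetric: "transpose (symmetric_part A) = symmetric_part A"
  by (simp add: symmetric_part_def transpose_scalar transpose_add add.commute)

lemma quadratic_symmetric_part: "v \<bullet> (symmetric_part A *v v) = v \<bullet> (A *v v)"
  by (simp add: symmetric_part_def scaleR_matrix_vector_assoc[symmetric]
      matrix_vector_mult_add_rdistrib inner_add_right inner_vector_matrix)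

lemma inner_symmetric_part: "transpose W = W \<Longrightarrow> inner (symmetric_part A) W = inner A W"
  by (simp add: symmetric_part_def inner_add_left inner_transpose[symmetric])

section \<open>Conic duality for Loewner-order constraints\<close>

lemma closed_sums_dominated:
  fixes A B :: "'a::euclidean_space set" and f :: "'a \<Rightarrow> real"
  assumes "closed A" "closed B" "linear f"
    and dom: "\<And>a. a \<in> A \<Longrightarrow> norm a \<le> f a" and nonneg: "\<And>b. b \<in> B \<Longrightarrow> 0 \<le> f b"
  shows "closed {a + b | a b. a \<in> A \<and> b \<in> B}"
  unfolding closed_sequential_limits
proof (intro allI impI, elim conjE)
  fix s l
  assume "\<forall>n. s n \<in> {a + b |a b. a \<in> A \<and> b \<in> B}" and "s \<longlonglongrightarrow> l"
  then have "\<forall>n. \<exists>a b. a \<in> A \<and> b \<in> B \<and> s n = a + b" by blast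
  then obtain a b where ab: "\<And>n. a n \<in> A" "\<And>n. b n \<in> B" "\<And>n. s n = a n + b n"
    by metis
  have "(\<lambda>n. f (s n)) \<longlonglongrightarrow> f l"
    using bounded_linear.tendsto[OF linear_conv_bounded_linear[THEN iffD1, OF \<open>linear f\<close>] \<open>s \<longlonglongrightarrow> l\<close>] .
  then have "Bseq (\<lambda>n. f (s n))" by (rule convergent_imp_Bseq[OF convergentI])
  then obtain K where K: "\<And>n. norm (f (s n)) \<le> K" unfolding Bseq_def by auto
  have "norm (a n) \<le> K" for n
  proof -
    have "norm (a n) \<le> f (a n) + f (b n)" using dom[OF ab(1)[of n]] nonneg[OF ab(2)[of n]] by linarith
    also have "\<dots> = f (s n)" using ab(3) linear_add[OF \<open>linear f\<close>] by simp
    finally show ?thesis using K[of n] by simp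
  qed
  then have "bounded (range a)" unfolding bounded_iff by blast
  then obtain a0 r where r: "strict_mono r" and ar: "(a \<circ> r) \<longlonglongrightarrow> a0"
    using bounded_imp_convergent_subsequence by blast
  have "a0 \<in> A" using \<open>closed A\<close> ar ab(1) closed_sequentially[of A "a \<circ> r" a0] by auto
  have "(\<lambda>n. (s \<circ> r) n - (a \<circ> r) n) \<longlonglongrightarrow> l - a0"
    using tendsto_diff[OF LIMSEQ_subseq_LIMSEQ[OF \<open>s \<longlonglongrightarrow> l\<close> r] ar] .
  moreover have "(\<lambda>n. (s \<circ> r) n - (a \<circ> r) n) = b \<circ> r" using ab(3) by (auto simp: fun_eq_iff)
  ultimately have "(b \<circ> r) \<longlonglongrightarrow> l - a0" by simp
  then have "l - a0 \<in> B" using \<open>closed B\<close> ab(2) closed_sequentially[of B "b \<circ> r" "l - a0"] by auto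
  then show "l \<in> {a + b |a b. a \<in> A \<and> b \<in> B}"
    using \<open>a0 \<in> A\<close> by (intro CollectI exI[of _ a0] exI[of _ "l - a0"]) simp
qed

lemma convex_sums_Collect:
  assumes "convex A" "convex B"
  shows "convex {a + b | a b. a \<in> A \<and> b \<in> B}"
proof -
  have "{a + b | a b. a \<in> A \<and> b \<in> B} = (\<Union>a\<in>A. \<Union>b\<in>B. {a + b})" by blast
  then show ?thesis using convex_sums[OF assms] by simp
qed

lemma separating_hyperplane_closed_cone:
  fixes K :: "'a::euclidean_space set"
  assumes "closed K" "convex K" "cone K" "0 \<in> K" "x \<notin> K"
  obtains a where "inner a x < 0" "\<And>y. y \<in> K \<Longrightarrow> 0 \<le> inner a y"
proof -
  obtain a b where ax: "inner a x < b" and aK: "\<And>y. y \<in> K \<Longrightarrow> b < inner a y"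
    using separating_hyperplane_closed_point[OF assms(2,1,5)] by blast
  have "b < 0" using aK[OF \<open>0 \<in> K\<close>] by simp
  have nonneg: "0 \<le> inner a y" if "y \<in> K" for y
  proof (rule ccontr)
    assume "\<not> 0 \<le> inner a y"
    then have "0 \<le> b / inner a y" using \<open>b < 0\<close> by (simp add: divide_nonpos_neg)
    then have "b < inner a ((b / inner a y) *\<^sub>R y)" using aK mem_cone[OF \<open>cone K\<close> that] by blast
    also have "\<dots> = b" using \<open>\<not> 0 \<le> inner a y\<close> by simp
    finally show False by simp
  qed
  from ax \<open>b < 0\<close> have "inner a x < 0" by simp
  from that[OF this nonneg] show thesis .
qed

text \<open>The feasible multipliers of the constraint \<open>Y \<preceq> W\<close> in \<open>min {H \<bullet> Y | 0 \<preceq> Y \<preceq> W}\<close>.\<close>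
definition loewner_upper_bounds :: "real^'n^'n \<Rightarrow> (real^'n^'n) set" where
  "loewner_upper_bounds H = {R. psd R \<and> psd (R + H)}"

lemma loewner_upper_bounds_nonempty:
  fixes H :: "real^'n^'n"
  assumes "transpose H = H"
  obtains R where "R \<in> loewner_upper_bounds H"
proof -
  define c where "c = (\<Sum>i\<in>UNIV. \<Sum>j\<in>UNIV. \<bar>H $ i $ j\<bar>)"
  have "0 \<le> c" unfolding c_def by (intro sum_nonneg) auto
  have bound: "\<bar>v \<bullet> (H *v v)\<bar> \<le> c * (norm v)\<^sup>2" for v
  proof -
    have "\<bar>v \<bullet> (H *v v)\<bar> \<le> norm v * norm (H *v v)" by (rule Cauchy_Schwarz_ineq2)
    also have "norm (H *v v) \<le> onorm ((*v) H) * norm v" by (rule onorm) simp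
    also have "onorm ((*v) H) \<le> c" unfolding c_def by (rule onorm_le_matrix_component_sum)
    finally show ?thesis
      by (simp add: power2_eq_square mult_left_mono mult_right_mono mult.assoc mult.left_commute)
  qed
  have "psd (c *\<^sub>R mat 1 + H)"
    unfolding psd_def
  proof
    show "transpose (c *\<^sub>R mat 1 + H) = c *\<^sub>R mat 1 + H"
      by (simp add: transpose_add transpose_scalar assms)
    show "\<forall>v. 0 \<le> v \<bullet> ((c *\<^sub>R mat 1 + H) *v v)"
    proof
      fix v :: "real^'n"
      have "v \<bullet> ((c *\<^sub>R mat 1 + H) *v v) = c * (norm v)\<^sup>2 + v \<bullet> (H *v v)"
        by (simp add: matrix_vector_mult_add_rdistrib scaleR_matrix_vector_assoc[symmetric]
            inner_add_right power2_norm_eq_inner)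
      then show "0 \<le> v \<bullet> ((c *\<^sub>R mat 1 + H) *v v)" using bound[of v] by linarith
    qed
  qed
  with \<open>0 \<le> c\<close> show thesis
    by (intro that[of "c *\<^sub>R mat 1"]) (simp add: loewner_upper_bounds_def psd_scaleR psd_mat_1)
qed

text \<open>For any multiplier \<open>R\<^sub>0\<close>, \<open>(S + \<epsilon> R\<^sub>0) / (r + \<epsilon>)\<close> is again a multiplier for every
  \<open>\<epsilon> > 0\<close>; letting \<open>\<epsilon> \<rightarrow> 0\<close> also covers the recession case \<open>r = 0\<close>.\<close>
lemma loewner_upper_bounds_scaled_bound:
  fixes H W S :: "real^'n^'n"
  assumes "transpose H = H"
    and bound: "\<And>R. R \<in> loewner_upper_bounds H \<Longrightarrow> t \<le> inner W R"
    and "psd S" "psd (S + r *\<^sub>R H)" "0 \<le> r"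
  shows "r * t \<le> inner W S"
proof (rule ccontr)
  assume "\<not> r * t \<le> inner W S"
  then have "0 < r * t - inner W S" by simp
  obtain R0 where R0: "R0 \<in> loewner_upper_bounds H"
    using loewner_upper_bounds_nonempty[OF assms(1)] .
  define \<epsilon> where "\<epsilon> = (r * t - inner W S) / (\<bar>inner W R0 - t\<bar> + 1)"
  have "0 < \<epsilon>" using \<open>0 < r * t - inner W S\<close> by (simp add: \<epsilon>_def add_pos_nonneg)
  have "(1 / (r + \<epsilon>)) *\<^sub>R (S + \<epsilon> *\<^sub>R R0) \<in> loewner_upper_bounds H"
  proof -
    have "(1 / (r + \<epsilon>)) *\<^sub>R (S + \<epsilon> *\<^sub>R R0) + H
        = (1 / (r + \<epsilon>)) *\<^sub>R (S + \<epsilon> *\<^sub>R R0) + (1 / (r + \<epsilon>)) *\<^sub>R ((r + \<epsilon>) *\<^sub>R H)"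
      using \<open>0 \<le> r\<close> \<open>0 < \<epsilon>\<close> by simp
    also have "\<dots> = (1 / (r + \<epsilon>)) *\<^sub>R ((S + r *\<^sub>R H) + \<epsilon> *\<^sub>R (R0 + H))"
      by (simp only: scaleR_right_distrib[symmetric]) (simp add: algebra_simps)
    finally have "(1 / (r + \<epsilon>)) *\<^sub>R (S + \<epsilon> *\<^sub>R R0) + H
        = (1 / (r + \<epsilon>)) *\<^sub>R ((S + r *\<^sub>R H) + \<epsilon> *\<^sub>R (R0 + H))" .
    then show ?thesis
      using R0 assms(3-5) \<open>0 < \<epsilon>\<close>
      by (auto simp: loewner_upper_bounds_def intro!: psd_add psd_scaleR)
  qed
  then have "t \<le> inner W ((1 / (r + \<epsilon>)) *\<^sub>R (S + \<epsilon> *\<^sub>R R0))" by (rule bound)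
  then have "t \<le> (inner W S + \<epsilon> * inner W R0) / (r + \<epsilon>)"
    by (simp only: inner_scaleR_right inner_add_right) simp
  then have "t * (r + \<epsilon>) \<le> inner W S + \<epsilon> * inner W R0"
    using \<open>0 \<le> r\<close> \<open>0 < \<epsilon>\<close> by (simp add: pos_le_divide_eq)
  then have "r * t - inner W S \<le> \<epsilon> * (inner W R0 - t)" by (simp add: algebra_simps)
  also have "\<dots> \<le> \<epsilon> * \<bar>inner W R0 - t\<bar>" using \<open>0 < \<epsilon>\<close> by (intro mult_left_mono) auto
  also have "\<dots> < r * t - inner W S"
    using \<open>0 < r * t - inner W S\<close> by (simp add: \<epsilon>_def field_simps)
  finally show False by simp
qed

definition loewner_cone :: "real^'n^'n \<Rightarrow> ((real^'n^'n) \<times> real) set" where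
  "loewner_cone H = {(Y + A, inner H Y + s) | Y A s. psd Y \<and> psd A \<and> 0 \<le> s}"

lemma closed_loewner_cone: "closed (loewner_cone (H :: real^'n^'n))"
proof -
  define L where "L = {p :: (real^'n^'n) \<times> real. psd (fst p) \<and> snd p = inner H (fst p)}"
  define P where "P = {p :: (real^'n^'n) \<times> real. psd (fst p) \<and> 0 \<le> snd p}"
  define c where "c = real CARD('n) ^ 2 * (1 + norm H)"
  have eq: "loewner_cone H = {a + b | a b. a \<in> L \<and> b \<in> P}"
    unfolding loewner_cone_def L_def P_def by force
  have closed_fst: "closed {p :: (real^'n^'n) \<times> real. psd (fst p)}"
  proof -
    have "closed (fst -` {M :: real^'n^'n. psd M} :: ((real^'n^'n) \<times> real) set)"
      by (intro continuous_closed_vimage closed_psd continuous_intros)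
    then show ?thesis by (simp add: vimage_def)
  qed
  have "closed L" "closed P"
    unfolding L_def P_def using closed_fst
    by (auto intro!: closed_Collect_conj closed_Collect_eq closed_Collect_le continuous_intros)
  moreover have "linear (\<lambda>p :: (real^'n^'n) \<times> real. c * inner (fst p) (mat 1))"
    by (intro linearI) (simp_all add: inner_add_left algebra_simps)
  moreover have "norm a \<le> c * inner (fst a) (mat 1)" if "a \<in> L" for a
  proof -
    obtain Y where a: "a = (Y, inner H Y)" "psd Y" using \<open>a \<in> L\<close> unfolding L_def by (cases a) auto
    have "norm a \<le> norm Y + norm H * norm Y"
      using norm_Pair_le[of Y "inner H Y"] Cauchy_Schwarz_ineq2[of H Y] unfolding a(1) by simp
    also have "\<dots> = (1 + norm H) * norm Y" by (simp add: algebra_simps)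
    also have "\<dots> \<le> (1 + norm H) * (real CARD('n) ^ 2 * trace Y)"
      using psd_norm_bound[OF a(2)] by (intro mult_left_mono) auto
    finally show ?thesis unfolding a(1) c_def by (simp add: trace_eq_inner_mat_1 mult_ac)
  qed
  moreover have "0 \<le> c * inner (fst b) (mat 1)" if "b \<in> P" for b
    using that psd_trace_nonneg[of "fst b"] by (simp add: P_def c_def trace_eq_inner_mat_1)
  ultimately show ?thesis unfolding eq by (rule closed_sums_dominated)
qed

lemma loewner_coneI: "psd Y \<Longrightarrow> psd A \<Longrightarrow> 0 \<le> s \<Longrightarrow> (Y + A, inner H Y + s) \<in> loewner_cone H"
  unfolding loewner_cone_def by blast

lemma convex_loewner_cone: "convex (loewner_cone (H :: real^'n^'n))"
proof (rule convexI)
  fix p q and u v :: real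
  assume "p \<in> loewner_cone H" "q \<in> loewner_cone H" "0 \<le> u" "0 \<le> v"
  then obtain Y1 A1 s1 Y2 A2 s2 where
    "p = (Y1 + A1, inner H Y1 + s1)" "psd Y1" "psd A1" "0 \<le> s1"
    "q = (Y2 + A2, inner H Y2 + s2)" "psd Y2" "psd A2" "0 \<le> s2"
    unfolding loewner_cone_def by blast
  moreover have "u *\<^sub>R (Y1 + A1, inner H Y1 + s1) + v *\<^sub>R (Y2 + A2, inner H Y2 + s2)
      = ((u *\<^sub>R Y1 + v *\<^sub>R Y2) + (u *\<^sub>R A1 + v *\<^sub>R A2), inner H (u *\<^sub>R Y1 + v *\<^sub>R Y2) + (u * s1 + v * s2))"
    by (simp add: inner_add_right algebra_simps)
  ultimately show "u *\<^sub>R p + v *\<^sub>R q \<in> loewner_cone H"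
    using \<open>0 \<le> u\<close> \<open>0 \<le> v\<close> by (auto intro!: loewner_coneI psd_add psd_scaleR)
qed

lemma cone_loewner_cone: "cone (loewner_cone (H :: real^'n^'n))"
  unfolding cone_def
proof (intro ballI allI impI)
  fix p and c :: real
  assume "p \<in> loewner_cone H" "0 \<le> c"
  then obtain Y A s where "p = (Y + A, inner H Y + s)" "psd Y" "psd A" "0 \<le> s"
    unfolding loewner_cone_def by blast
  moreover have "c *\<^sub>R (Y + A, inner H Y + s) = (c *\<^sub>R Y + c *\<^sub>R A, inner H (c *\<^sub>R Y) + c * s)"
    by (simp add: algebra_simps)
  ultimately show "c *\<^sub>R p \<in> loewner_cone H"
    using loewner_coneI[of "c *\<^sub>R Y" "c *\<^sub>R A" "c * s" H] \<open>0 \<le> c\<close> by (simp add: psd_scaleR)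
qed

text \<open>Strong duality for \<open>min {H \<bullet> Y | 0 \<preceq> Y \<preceq> W}\<close>: a functional separating \<open>(W, -t)\<close> from
  \<open>loewner_cone H\<close> has as its matrix part (up to scaling) a multiplier violating the bound.\<close>
lemma loewner_upper_bounds_duality:
  fixes H W :: "real^'n^'n"
  assumes "transpose H = H" "transpose W = W"
    and bound: "\<And>R. R \<in> loewner_upper_bounds H \<Longrightarrow> t \<le> inner W R"
  obtains Y where "psd Y" "psd (W - Y)" "inner H Y \<le> - t"
proof -
  have "(W, -t) \<in> loewner_cone H"
  proof (rule ccontr)
    assume "(W, -t) \<notin> loewner_cone H"
    moreover have "0 \<in> loewner_cone H" using loewner_coneI[of 0 0 0] by (simp add: zero_prod_def)
    ultimately obtain a where sep: "inner a (W, -t) < 0"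
      and nonneg: "\<And>p. p \<in> loewner_cone H \<Longrightarrow> 0 \<le> inner a p"
      using separating_hyperplane_closed_cone[OF closed_loewner_cone convex_loewner_cone
          cone_loewner_cone] by blast
    obtain A r where a: "a = (A, r)" by (cases a)
    have "0 \<le> r" using nonneg[OF loewner_coneI[of 0 0 1]] by (simp add: a)
    have "psd (symmetric_part A)"
      unfolding psd_def
      using nonneg[OF loewner_coneI[OF psd_0 psd_outer order.refl]]
      by (simp add: a symmetric_part_symmetric quadratic_symmetric_part inner_outer)
    moreover have "psd (symmetric_part A + r *\<^sub>R H)"
      unfolding psd_def
      using nonneg[OF loewner_coneI[OF psd_outer psd_0 order.refl]] assms(1)
      by (simp add: a symmetric_part_symmetric transpose_add transpose_scalar inner_outer
          matrix_vector_mult_add_rdistrib inner_add_right scaleR_matrix_vector_assoc[symmetric]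
          quadratic_symmetric_part)
    ultimately have "r * t \<le> inner W (symmetric_part A)"
      using loewner_upper_bounds_scaled_bound[OF assms(1) bound] \<open>0 \<le> r\<close> by blast
    then show False
      using sep assms(2) by (simp add: a inner_commute[of W] inner_symmetric_part)
  qed
  then obtain Y A s where "W = Y + A" "- t = inner H Y + s" "psd Y" "psd A" "0 \<le> s"
    unfolding loewner_cone_def by blast
  then show thesis by (intro that[of Y]) auto
qed

lemma closed_loewner_upper_bounds: "closed (loewner_upper_bounds (H :: real^'n^'n))"
proof -
  have "loewner_upper_bounds H = {R. psd R} \<inter> (\<lambda>R. R + H) -` {R. psd R}"
    unfolding loewner_upper_bounds_def by auto
  moreover have "closed ((\<lambda>R. R + H) -` {R :: real^'n^'n. psd R})"
    by (intro continuous_closed_vimage closed_psd continuous_intros)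
  ultimately show ?thesis using closed_psd by auto
qed

lemma convex_loewner_upper_bounds: "convex (loewner_upper_bounds H)"
proof (rule convexI)
  fix R1 R2 and u v :: real
  assume "R1 \<in> loewner_upper_bounds H" "R2 \<in> loewner_upper_bounds H" "0 \<le> u" "0 \<le> v" "u + v = 1"
  moreover have "u *\<^sub>R R1 + v *\<^sub>R R2 + H = u *\<^sub>R (R1 + H) + v *\<^sub>R (R2 + H)"
    using \<open>u + v = 1\<close> by (simp add: algebra_simps flip: scaleR_add_left)
  ultimately show "u *\<^sub>R R1 + v *\<^sub>R R2 \<in> loewner_upper_bounds H"
    by (auto simp: loewner_upper_bounds_def intro!: psd_add psd_scaleR)
qed

text \<open>\<open>-\<mu> I \<in> multiplier_sums H n\<close> is dual feasibility of \<open>\<mu>\<close> for the reduced problem.\<close>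
fun multiplier_sums :: "(nat \<Rightarrow> real^'n^'n) \<Rightarrow> nat \<Rightarrow> (real^'n^'n) set" where
  "multiplier_sums H 0 = {P. psd P}"
| "multiplier_sums H (Suc n) =
     {M + R | M R. M \<in> multiplier_sums H n \<and> R \<in> loewner_upper_bounds (H (Suc n))}"

lemma multiplier_sums_psd: "M \<in> multiplier_sums H n \<Longrightarrow> psd M"
  by (induction n arbitrary: M) (auto intro!: psd_add simp: loewner_upper_bounds_def)

lemma closed_multiplier_sums: "closed (multiplier_sums (H :: nat \<Rightarrow> real^'n^'n) n)"
proof (induction n)
  case 0
  then show ?case using closed_psd by simp
next
  case (Suc n)
  have "linear (\<lambda>M :: real^'n^'n. real CARD('n) ^ 2 * inner M (mat 1))"
    by (intro linearI) (simp_all add: inner_add_left algebra_simps)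
  moreover have "norm M \<le> real CARD('n) ^ 2 * inner M (mat 1)" if "M \<in> multiplier_sums H n" for M
    using psd_norm_bound[OF multiplier_sums_psd[OF that]] by (simp add: trace_eq_inner_mat_1)
  moreover have "0 \<le> real CARD('n) ^ 2 * inner R (mat 1)" if "R \<in> loewner_upper_bounds (H (Suc n))" for R
    using that psd_trace_nonneg[of R] by (simp add: loewner_upper_bounds_def trace_eq_inner_mat_1)
  ultimately show ?case
    using closed_sums_dominated[OF Suc.IH closed_loewner_upper_bounds] by simp
qed

lemma convex_multiplier_sums: "convex (multiplier_sums H n)"
  by (induction n) (simp_all add: convex_psd convex_sums_Collect convex_loewner_upper_bounds)

lemma multiplier_sums_nonempty:
  assumes "\<And>i. transpose (H i) = H i"
  obtains M where "M \<in> multiplier_sums H n"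
proof -
  have "\<exists>M. M \<in> multiplier_sums H n"
  proof (induction n)
    case (Suc n)
    then obtain M where "M \<in> multiplier_sums H n" by blast
    moreover obtain R where "R \<in> loewner_upper_bounds (H (Suc n))"
      using loewner_upper_bounds_nonempty[OF assms] .
    ultimately have "M + R \<in> multiplier_sums H (Suc n)" by auto
    then show ?case ..
  qed (rule exI[of _ 0], simp)
  then show thesis using that by blast
qed

lemma multiplier_sums_add_psd: "M \<in> multiplier_sums H n \<Longrightarrow> psd P \<Longrightarrow> M + P \<in> multiplier_sums H n"
proof (induction n arbitrary: M)
  case (Suc n)
  then obtain M' R where M: "M = M' + R" "M' \<in> multiplier_sums H n"
    "R \<in> loewner_upper_bounds (H (Suc n))" by auto
  have "M' + P \<in> multiplier_sums H n" using Suc.IH[OF M(2) Suc.prems(2)] .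
  moreover have "M + P = (M' + P) + R" using M(1) by (simp add: algebra_simps)
  ultimately show ?case using M(3) by (simp only: multiplier_sums.simps) blast
qed (simp add: psd_add)

lemma multiplier_sums_decompose:
  "M \<in> multiplier_sums H n \<Longrightarrow>
     \<exists>P R. psd P \<and> (\<forall>i\<in>{1..n}. R i \<in> loewner_upper_bounds (H i)) \<and> M = P + (\<Sum>i=1..n. R i)"
proof (induction n arbitrary: M)
  case (Suc n)
  then obtain M' R' where M: "M = M' + R'" "M' \<in> multiplier_sums H n"
    "R' \<in> loewner_upper_bounds (H (Suc n))" by auto
  from Suc.IH[OF M(2)] obtain P R where
    "psd P" "\<forall>i\<in>{1..n}. R i \<in> loewner_upper_bounds (H i)" "M' = P + (\<Sum>i=1..n. R i)"
    by blast
  moreover have "(\<Sum>i=1..n. (R(Suc n := R')) i) = (\<Sum>i=1..n. R i)" by (intro sum.cong) auto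
  ultimately show ?case using M(1,3)
    by (intro exI[of _ P] exI[of _ "R(Suc n := R')"]) (auto simp: le_Suc_eq sum.cl_ivl_Suc)
qed simp

lemma multiplier_sums_duality:
  assumes "\<And>i. transpose (H i) = H i" "transpose W = W"
  shows "(\<And>M. M \<in> multiplier_sums H n \<Longrightarrow> b \<le> inner W M) \<Longrightarrow>
    \<exists>Y. (\<forall>i\<in>{1..n}. psd (Y i) \<and> psd (W - Y i)) \<and> (\<Sum>i=1..n. inner (H i) (Y i)) \<le> -b"
proof (induction n arbitrary: b)
  case 0
  then have "b \<le> 0" using psd_0 by (metis inner_zero_right mem_Collect_eq multiplier_sums.simps(1))
  then show ?case by simp
next
  case (Suc n)
  obtain M0 where M0: "M0 \<in> multiplier_sums H n" using multiplier_sums_nonempty[OF assms(1)] .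
  have split: "b \<le> inner W M + inner W R"
    if "M \<in> multiplier_sums H n" "R \<in> loewner_upper_bounds (H (Suc n))" for M R
  proof -
    have "M + R \<in> multiplier_sums H (Suc n)" using that by auto
    from Suc.prems[OF this] show ?thesis by (simp add: inner_add_right)
  qed
  define t where "t = (INF R\<in>loewner_upper_bounds (H (Suc n)). inner W R)"
  have bdd: "bdd_below ((\<lambda>R. inner W R) ` loewner_upper_bounds (H (Suc n)))"
    using split[OF M0] by (intro bdd_belowI2[of _ "b - inner W M0"]) (simp add: algebra_simps)
  have "t \<le> inner W R" if "R \<in> loewner_upper_bounds (H (Suc n))" for R
    unfolding t_def using bdd that by (rule cINF_lower)
  then obtain Y' where Y': "psd Y'" "psd (W - Y')" "inner (H (Suc n)) Y' \<le> - t"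
    using loewner_upper_bounds_duality[OF assms(1) assms(2)] by blast
  have "b - t \<le> inner W M" if "M \<in> multiplier_sums H n" for M
  proof -
    obtain R0 where "R0 \<in> loewner_upper_bounds (H (Suc n))"
      using loewner_upper_bounds_nonempty[OF assms(1)] .
    then have "b - inner W M \<le> t"
      unfolding t_def using split[OF that] by (intro cINF_greatest) (auto simp: algebra_simps)
    then show ?thesis by simp
  qed
  from Suc.IH[OF this] obtain Y where
    "\<forall>i\<in>{1..n}. psd (Y i) \<and> psd (W - Y i)" "(\<Sum>i=1..n. inner (H i) (Y i)) \<le> - (b - t)"
    by blast
  moreover have "(\<Sum>i=1..n. inner (H i) ((Y(Suc n := Y')) i)) = (\<Sum>i=1..n. inner (H i) (Y i))"
    by (intro sum.cong) auto
  ultimately show ?case using Y'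
    by (intro exI[of _ "Y(Suc n := Y')"]) (auto simp: le_Suc_eq sum.cl_ivl_Suc)
qed

lemma multiplier_sums_separator_psd:
  assumes "M0 \<in> multiplier_sums H n" and sep: "\<And>M. M \<in> multiplier_sums H n \<Longrightarrow> b < inner A M"
  shows "psd (symmetric_part A)"
proof -
  have "0 \<le> v \<bullet> (A *v v)" for v
  proof (rule ccontr)
    assume "\<not> 0 \<le> v \<bullet> (A *v v)"
    then have neg: "inner A (outer v v) < 0" by (simp add: inner_outer)
    define c where "c = (inner A M0 - b) / - inner A (outer v v)"
    have "0 \<le> c" unfolding c_def using neg sep[OF assms(1)] by (intro divide_nonneg_pos) auto
    then have "b < inner A (M0 + c *\<^sub>R outer v v)"
      using sep multiplier_sums_add_psd[OF assms(1) psd_scaleR[OF psd_outer]] by blast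
    also have "\<dots> = b" using neg by (simp add: c_def inner_diff_right)
    finally show False by simp
  qed
  then show ?thesis by (simp add: psd_def symmetric_part_symmetric quadratic_symmetric_part)
qed

lemma psd_separator_perturbation:
  fixes A P :: "real^'n^'n"
  assumes "psd (symmetric_part A)" "transpose P = P" "inner A P < b"
  obtains W where "positive_definite W" "inner W P < b" "\<And>M. psd M \<Longrightarrow> inner A M \<le> inner W M"
proof -
  define c where "c = \<bar>trace P\<bar>"
  define \<delta> where "\<delta> = (b - inner A P) / (2 * (1 + c))"
  define W where "W = symmetric_part A + \<delta> *\<^sub>R mat 1"
  have "0 \<le> c" by (simp add: c_def)
  then have "0 < \<delta>" using assms(3) by (simp add: \<delta>_def)
  have inner_W: "inner W M = inner A M + \<delta> * trace M" if "transpose M = M" for M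
    using that
    by (simp add: W_def inner_add_left inner_symmetric_part trace_eq_inner_mat_1 inner_commute[of "mat 1"])
  have "positive_definite W"
    using assms(1) \<open>0 < \<delta>\<close> psd_nonneg[of "symmetric_part A"]
    by (auto simp: positive_definite_def W_def psd_def transpose_add transpose_scalar
        matrix_vector_mult_add_rdistrib inner_add_right scaleR_matrix_vector_assoc[symmetric]
        intro: add_nonneg_pos)
  moreover have "inner W P < b"
  proof -
    have "inner W P \<le> inner A P + \<delta> * c"
      using inner_W[OF assms(2)] \<open>0 < \<delta>\<close> by (simp add: c_def mult_left_mono)
    also have "\<delta> * c = (b - inner A P) * (c / (2 * (1 + c)))" by (simp add: \<delta>_def)
    also have "\<dots> < (b - inner A P) * 1"
      using \<open>0 \<le> c\<close> assms(3) by (intro mult_strict_left_mono) (auto simp: field_simps)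
    finally show ?thesis by simp
  qed
  moreover have "inner A M \<le> inner W M" if "psd M" for M
    using inner_W[OF psd_symmetric[OF that]] psd_trace_nonneg[OF that] \<open>0 < \<delta>\<close> by simp
  ultimately show thesis by (rule that)
qed

lemma scaled_identity_in_multiplier_sums:
  fixes H :: "nat \<Rightarrow> real^'n^'n"
  assumes symmetric: "\<And>i. transpose (H i) = H i"
    and primal: "\<And>W Y. positive_definite W \<Longrightarrow> \<forall>i\<in>{1..n}. psd (Y i) \<and> psd (W - Y i) \<Longrightarrow>
        mu * trace W \<le> (\<Sum>i=1..n. inner (H i) (Y i))"
  shows "(- mu) *\<^sub>R mat 1 \<in> multiplier_sums H n"
proof (rule ccontr)
  define P where "P = (- mu) *\<^sub>R (mat 1 :: real^'n^'n)"
  assume "(- mu) *\<^sub>R mat 1 \<notin> multiplier_sums H n"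
  then obtain A b where "inner A P < b" and sep: "\<And>M. M \<in> multiplier_sums H n \<Longrightarrow> b < inner A M"
    using separating_hyperplane_closed_point[OF convex_multiplier_sums closed_multiplier_sums]
    unfolding P_def by blast
  obtain M0 where M0: "M0 \<in> multiplier_sums H n" using multiplier_sums_nonempty[OF symmetric] .
  have "psd (symmetric_part A)" by (rule multiplier_sums_separator_psd[OF M0 sep])
  moreover have "transpose P = P" by (simp add: P_def transpose_scalar)
  ultimately obtain W where W: "positive_definite W" "inner W P < b"
    and AW: "\<And>M. psd M \<Longrightarrow> inner A M \<le> inner W M"
    using psd_separator_perturbation \<open>inner A P < b\<close> by blast
  have "b \<le> inner W M" if "M \<in> multiplier_sums H n" for M
    using sep[OF that] AW[OF multiplier_sums_psd[OF that]] by simp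
  moreover have "transpose W = W" using W(1) by (simp add: positive_definite_def)
  ultimately obtain Y where
    "\<forall>i\<in>{1..n}. psd (Y i) \<and> psd (W - Y i)" "(\<Sum>i=1..n. inner (H i) (Y i)) \<le> - b"
    using multiplier_sums_duality[of H W n b, OF symmetric] by blast
  with primal[OF W(1)] have "mu * trace W \<le> - b" by fastforce
  moreover have "inner W P = - mu * trace W"
    by (simp add: P_def trace_eq_inner_mat_1 inner_commute)
  ultimately show False using W(2) by linarith
qed

section \<open>Trace pairing of positive semidefinite forms\<close>

definition bilinear_form :: "'i set \<Rightarrow> ('i \<Rightarrow> 'i \<Rightarrow> real) \<Rightarrow> ('i \<Rightarrow> real) \<Rightarrow> ('i \<Rightarrow> real) \<Rightarrow> real" where
  "bilinear_form I W x y = (\<Sum>r\<in>I. \<Sum>s\<in>I. x r * W r s * y s)"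

definition psd_on :: "'i set \<Rightarrow> ('i \<Rightarrow> 'i \<Rightarrow> real) \<Rightarrow> bool" where
  "psd_on I W \<longleftrightarrow> (\<forall>p\<in>I. \<forall>q\<in>I. W p q = W q p) \<and> (\<forall>z. 0 \<le> bilinear_form I W z z)"

definition unit_fun :: "'i \<Rightarrow> 'i \<Rightarrow> real" where
  "unit_fun p r = (if r = p then 1 else 0)"

lemma bilinear_form_add_left:
  "bilinear_form I W (\<lambda>r. x r + y r) z = bilinear_form I W x z + bilinear_form I W y z"
  unfolding bilinear_form_def by (simp add: algebra_simps sum.distrib)

lemma bilinear_form_add_right:
  "bilinear_form I W z (\<lambda>r. x r + y r) = bilinear_form I W z x + bilinear_form I W z y"
  unfolding bilinear_form_def by (simp add: algebra_simps sum.distrib)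

lemma bilinear_form_scale_left: "bilinear_form I W (\<lambda>r. c * x r) z = c * bilinear_form I W x z"
  unfolding bilinear_form_def by (simp add: sum_distrib_left algebra_simps)

lemma bilinear_form_scale_right: "bilinear_form I W z (\<lambda>r. c * x r) = c * bilinear_form I W z x"
  unfolding bilinear_form_def by (simp add: sum_distrib_left algebra_simps)

lemma bilinear_form_commute:
  "\<forall>p\<in>I. \<forall>q\<in>I. W p q = W q p \<Longrightarrow> bilinear_form I W x y = bilinear_form I W y x"
  unfolding bilinear_form_def by (subst sum.swap) (auto intro!: sum.cong simp: algebra_simps)

lemma bilinear_form_unit_fun_left:
  assumes "finite I" "p \<in> I"
  shows "bilinear_form I W (unit_fun p) y = (\<Sum>s\<in>I. W p s * y s)"
proof -
  have "bilinear_form I W (unit_fun p) y = (\<Sum>r\<in>I. if r = p then \<Sum>s\<in>I. W p s * y s else 0)"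
    unfolding bilinear_form_def by (rule sum.cong) (auto simp: unit_fun_def)
  then show ?thesis using assms by simp
qed

lemma bilinear_form_unit_fun:
  assumes "finite I" "p \<in> I" "q \<in> I"
  shows "bilinear_form I W (unit_fun p) (unit_fun q) = W p q"
proof -
  have "(\<Sum>s\<in>I. W p s * unit_fun q s) = (\<Sum>s\<in>I. if s = q then W p q else 0)"
    by (rule sum.cong) (auto simp: unit_fun_def)
  then show ?thesis using assms by (simp add: bilinear_form_unit_fun_left)
qed

lemma psd_on_diagonal_nonneg: "finite I \<Longrightarrow> psd_on I W \<Longrightarrow> p \<in> I \<Longrightarrow> 0 \<le> W p p"
  by (metis psd_on_def bilinear_form_unit_fun)

lemma psd_on_zero_diagonal:
  assumes "finite I" "psd_on I W" "p \<in> I" "q \<in> I" "W p p = 0"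
  shows "W p q = 0"
proof (rule ccontr)
  assume "W p q \<noteq> 0"
  define t where "t = - (W q q + 1) / (2 * W p q)"
  have "bilinear_form I W (\<lambda>r. t * unit_fun p r + unit_fun q r) (\<lambda>r. t * unit_fun p r + unit_fun q r)
      = 2 * t * W p q + W q q"
    using assms unfolding psd_on_def
    by (simp add: bilinear_form_add_left bilinear_form_add_right bilinear_form_scale_left
        bilinear_form_scale_right bilinear_form_unit_fun algebra_simps)
  also have "\<dots> = -1" using \<open>W p q \<noteq> 0\<close> by (simp add: t_def field_simps)
  finally show False using assms(2) unfolding psd_on_def by (metis add.inverse_neutral neg_le_iff_le not_one_le_zero)
qed

lemma psd_on_eliminate_pivot:
  assumes "finite I" "psd_on I W" "p \<in> I" "0 < W p p"
  shows "psd_on I (\<lambda>r s. W r s - W p r * W p s / W p p)"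
proof -
  define c where "c = W p p"
  have sym: "\<forall>r\<in>I. \<forall>s\<in>I. W r s = W s r" using assms(2) by (simp add: psd_on_def)
  have "0 \<le> bilinear_form I (\<lambda>r s. W r s - W p r * W p s / c) z z" for z
  proof -
    define \<sigma> where "\<sigma> = (\<Sum>r\<in>I. W p r * z r)"
    define z' where "z' = (\<lambda>r. z r + (- (\<sigma> / c)) * unit_fun p r)"
    have left: "bilinear_form I W (unit_fun p) z = \<sigma>"
      using bilinear_form_unit_fun_left[OF assms(1,3)] by (simp add: \<sigma>_def)
    have right: "bilinear_form I W z (unit_fun p) = \<sigma>"
      using left bilinear_form_commute[OF sym] by metis
    have "bilinear_form I (\<lambda>r s. W r s - W p r * W p s / c) z z
        = (\<Sum>r\<in>I. \<Sum>s\<in>I. z r * W r s * z s - (W p r * z r) * (W p s * z s) / c)"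
      unfolding bilinear_form_def by (intro sum.cong refl) (simp add: algebra_simps)
    also have "\<dots> = bilinear_form I W z z - \<sigma>\<^sup>2 / c"
      unfolding bilinear_form_def \<sigma>_def
      by (simp add: sum_subtractf sum_divide_distrib power2_eq_square sum_product)
    also have "\<dots> = bilinear_form I W z z - 2 * (\<sigma> / c) * \<sigma> + (\<sigma> / c) * ((\<sigma> / c) * c)"
      using assms(4) by (simp add: c_def power2_eq_square)
    also have "\<dots> = bilinear_form I W z' z'"
      unfolding z'_def
      by (simp only: bilinear_form_add_left bilinear_form_add_right bilinear_form_scale_left
          bilinear_form_scale_right left right bilinear_form_unit_fun[OF assms(1,3,3)] c_def)
    finally show ?thesis using assms(2) by (simp add: psd_on_def)
  qed
  then show ?thesis using sym by (simp add: psd_on_def c_def mult.commute)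
qed

lemma psd_on_eliminate_pivot_diagonal:
  assumes "finite I" "psd_on I W" "p \<in> I" "0 < W p p"
  shows "card {r\<in>I. W r r - W p r * W p r / W p p \<noteq> 0} < card {r\<in>I. W r r \<noteq> 0}"
proof -
  have "{r\<in>I. W r r - W p r * W p r / W p p \<noteq> 0} \<subseteq> {r\<in>I. W r r \<noteq> 0} - {p}"
  proof
    fix r assume "r \<in> {r\<in>I. W r r - W p r * W p r / W p p \<noteq> 0}"
    then have r: "r \<in> I" "W r r - W p r * W p r / W p p \<noteq> 0" by auto
    have "W r r \<noteq> 0"
    proof
      assume "W r r = 0"
      then have "W r p = 0" by (rule psd_on_zero_diagonal[OF assms(1,2) r(1) assms(3)])
      then have "W p r = 0" using assms(2,3) r(1) unfolding psd_on_def by metis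
      with \<open>W r r = 0\<close> r(2) show False by simp
    qed
    moreover have "r \<noteq> p" using r(2) assms(4) by auto
    ultimately show "r \<in> {r\<in>I. W r r \<noteq> 0} - {p}" using r(1) by auto
  qed
  then have "card {r\<in>I. W r r - W p r * W p r / W p p \<noteq> 0} \<le> card ({r\<in>I. W r r \<noteq> 0} - {p})"
    using assms(1) by (intro card_mono) auto
  also have "\<dots> < card {r\<in>I. W r r \<noteq> 0}" using assms(1,3,4) by (intro card_Diff1_less) auto
  finally show ?thesis .
qed

text \<open>Induction on the number of nonzero diagonal entries: each elimination step splits off the
  rank-one form \<open>w w\<^sup>T / W\<^sub>k\<^sub>k\<close>, whose pairing with \<open>S\<close> is \<open>S(w, w) / W\<^sub>k\<^sub>k \<ge> 0\<close>.\<close>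
lemma psd_on_frobenius_nonneg:
  assumes "finite I" and S: "\<forall>z. 0 \<le> bilinear_form I S z z"
  shows "psd_on I W \<Longrightarrow> 0 \<le> (\<Sum>p\<in>I. \<Sum>q\<in>I. S p q * W p q)"
proof (induction "card {p\<in>I. W p p \<noteq> 0}" arbitrary: W rule: less_induct)
  case less
  show ?case
  proof (cases "\<exists>p\<in>I. W p p \<noteq> 0")
    case False
    then have "W p q = 0" if "p \<in> I" "q \<in> I" for p q
      using psd_on_zero_diagonal[OF assms(1) less.prems that] that(1) by simp
    then show ?thesis by simp
  next
    case True
    then obtain k where k: "k \<in> I" "W k k \<noteq> 0" by blast
    have "0 \<le> W k k" using psd_on_diagonal_nonneg[OF assms(1) less.prems k(1)] .
    with k(2) have "0 < W k k" by simp
    define w where "w = W k"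
    define W' where "W' = (\<lambda>r s. W r s - w r * w s / W k k)"
    have psd': "psd_on I W'"
      unfolding W'_def w_def by (rule psd_on_eliminate_pivot[OF assms(1) less.prems k(1) \<open>0 < W k k\<close>])
    have "card {r\<in>I. W' r r \<noteq> 0} < card {r\<in>I. W r r \<noteq> 0}"
      unfolding W'_def w_def
      by (rule psd_on_eliminate_pivot_diagonal[OF assms(1) less.prems k(1) \<open>0 < W k k\<close>])
    from less.hyps[OF this psd'] have "0 \<le> (\<Sum>p\<in>I. \<Sum>q\<in>I. S p q * W' p q)" .
    moreover have "(\<Sum>p\<in>I. \<Sum>q\<in>I. S p q * W p q)
        = (\<Sum>p\<in>I. \<Sum>q\<in>I. S p q * W' p q + w p * S p q * w q / W k k)"
      unfolding W'_def by (intro sum.cong refl) (simp add: algebra_simps)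
    moreover have "\<dots> = (\<Sum>p\<in>I. \<Sum>q\<in>I. S p q * W' p q) + bilinear_form I S w w / W k k"
      unfolding bilinear_form_def by (simp add: sum.distrib sum_divide_distrib)
    moreover have "0 \<le> bilinear_form I S w w / W k k"
      using divide_nonneg_pos[OF S[rule_format] \<open>0 < W k k\<close>] .
    ultimately show ?thesis by simp
  qed
qed

section \<open>Block matrices and the relaxation\<close>

lemma sum_atMost_split_0: "(\<Sum>a\<le>l. f a) = f 0 + (\<Sum>a=1..l. f (a :: nat))"
proof -
  have "{..l} = insert 0 {1..l}" by auto
  then show ?thesis by simp
qed

lemma sum_atLeastAtMost_split:
  assumes "k \<le> l"
  shows "(\<Sum>i=1..l. f i) = (\<Sum>i=1..k. f i) + (\<Sum>i=k+1..l. f (i :: nat))"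
proof -
  have "{1..l} = {1..k} \<union> {k+1..l}" "{1..k} \<inter> {k+1..l} = {}" using assms by auto
  then show ?thesis by (simp add: sum.union_disjoint)
qed

lemma sum_arrow_blocks:
  fixes l :: nat
  assumes "\<And>a b. a \<le> l \<Longrightarrow> b \<le> l \<Longrightarrow> a \<noteq> 0 \<Longrightarrow> b \<noteq> 0 \<Longrightarrow> a \<noteq> b \<Longrightarrow> f a b = 0"
  shows "(\<Sum>a\<le>l. \<Sum>b\<le>l. f a b) = f 0 0 + (\<Sum>i=1..l. f 0 i + f i 0 + f i i)"
proof -
  have "(\<Sum>b=1..l. f a b) = f a a" if "a \<in> {1..l}" for a
  proof -
    have "(\<Sum>b=1..l. f a b) = (\<Sum>b=1..l. if b = a then f a a else 0)"
    proof (rule sum.cong)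
      fix b assume "b \<in> {1..l}"
      with that assms[of a b] show "f a b = (if b = a then f a a else 0)" by auto
    qed simp
    then show ?thesis using that by simp
  qed
  then have "(\<Sum>a=1..l. \<Sum>b\<le>l. f a b) = (\<Sum>a=1..l. f a 0 + f a a)"
    by (simp add: sum_atMost_split_0)
  then show ?thesis by (simp add: sum_atMost_split_0 sum.distrib algebra_simps)
qed

lemma sum_product_set: "(\<Sum>ap\<in>A \<times> B. F ap) = (\<Sum>a\<in>A. \<Sum>p\<in>B. F (a, p))"
  using sum.cartesian_product[of "\<lambda>a p. F (a, p)" B A] by (simp add: split_def)

definition flatten :: "(nat \<Rightarrow> nat \<Rightarrow> real^'n^'n) \<Rightarrow> nat \<times> 'n \<Rightarrow> nat \<times> 'n \<Rightarrow> real" where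
  "flatten A ap bq = A (fst ap) (fst bq) $ snd ap $ snd bq"

definition unflatten :: "(nat \<times> 'n \<Rightarrow> real) \<Rightarrow> nat \<Rightarrow> real^'n" where
  "unflatten z a = (\<chi> p. z (a, p))"

lemma bilinear_form_flatten:
  "bilinear_form ({..l} \<times> UNIV) (flatten A) z z
     = (\<Sum>a\<le>l. \<Sum>b\<le>l. unflatten z a \<bullet> (A a b *v unflatten z b))"
proof -
  have "bilinear_form ({..l} \<times> UNIV) (flatten A) z z
      = (\<Sum>a\<le>l. \<Sum>p\<in>UNIV. \<Sum>b\<le>l. \<Sum>q\<in>UNIV. z (a, p) * A a b $ p $ q * z (b, q))"
    unfolding bilinear_form_def flatten_def by (simp add: sum_product_set)
  also have "\<dots> = (\<Sum>a\<le>l. \<Sum>b\<le>l. \<Sum>p\<in>UNIV. \<Sum>q\<in>UNIV. z (a, p) * A a b $ p $ q * z (b, q))"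
    by (rule sum.cong[OF refl]) (rule sum.swap)
  also have "\<dots> = (\<Sum>a\<le>l. \<Sum>b\<le>l. unflatten z a \<bullet> (A a b *v unflatten z b))"
    by (simp add: inner_vec_def matrix_vector_mult_def unflatten_def sum_distrib_left mult.assoc)
  finally show ?thesis .
qed

lemma sum_flatten_product:
  "(\<Sum>ap\<in>{..l} \<times> UNIV. \<Sum>bq\<in>{..l} \<times> UNIV. flatten S ap bq * flatten W ap bq)
     = (\<Sum>a\<le>l. \<Sum>b\<le>l. inner (S a b) (W a b))"
proof -
  have "(\<Sum>ap\<in>{..l} \<times> UNIV. \<Sum>bq\<in>{..l} \<times> UNIV. flatten S ap bq * flatten W ap bq)
      = (\<Sum>a\<le>l. \<Sum>p\<in>UNIV. \<Sum>b\<le>l. \<Sum>q\<in>UNIV. S a b $ p $ q * W a b $ p $ q)"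
    unfolding flatten_def by (simp add: sum_product_set)
  also have "\<dots> = (\<Sum>a\<le>l. \<Sum>b\<le>l. \<Sum>p\<in>UNIV. \<Sum>q\<in>UNIV. S a b $ p $ q * W a b $ p $ q)"
    by (rule sum.cong[OF refl]) (rule sum.swap)
  finally show ?thesis by (simp add: inner_matrix)
qed

lemma block_frobenius_nonneg:
  assumes S: "\<And>z. 0 \<le> (\<Sum>a\<le>l. \<Sum>b\<le>l. z a \<bullet> (S a b *v z b))" and W: "block_psd l W"
  shows "0 \<le> (\<Sum>a\<le>l. \<Sum>b\<le>l. inner (S a b) (W a b))"
proof -
  let ?I = "{..l} \<times> (UNIV :: 4 set)"
  have "psd_on ?I (flatten W)"
    unfolding psd_on_def
  proof (intro conjI ballI allI)
    fix ap bq assume "ap \<in> ?I" "bq \<in> ?I"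
    then have "fst ap \<le> l" "fst bq \<le> l" by auto
    then have "W (fst bq) (fst ap) = transpose (W (fst ap) (fst bq))"
      using W unfolding block_psd_def block_sym_def by blast
    then show "flatten W ap bq = flatten W bq ap" by (simp add: flatten_def transpose_def)
  next
    fix z
    have "\<forall>z. 0 \<le> (\<Sum>a\<le>l. \<Sum>b\<le>l. z a \<bullet> (W a b *v z b))" using W by (simp add: block_psd_def)
    then show "0 \<le> bilinear_form ?I (flatten W) z z" unfolding bilinear_form_flatten by (rule spec)
  qed
  moreover have "\<forall>z. 0 \<le> bilinear_form ?I (flatten S) z z"
    using S by (simp add: bilinear_form_flatten)
  ultimately show ?thesis
    using psd_on_frobenius_nonneg[of ?I "flatten S" "flatten W"] by (simp add: sum_flatten_product)
qed

lemma block_symD: "block_sym l A \<Longrightarrow> i \<le> l \<Longrightarrow> j \<le> l \<Longrightarrow> A j i = transpose (A i j)"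
  unfolding block_sym_def by blast

definition shifted_cost :: "(nat \<Rightarrow> real^3) \<Rightarrow> (nat \<Rightarrow> real^3) \<Rightarrow> (nat \<Rightarrow> real) \<Rightarrow> nat \<Rightarrow> real^4^4" where
  "shifted_cost y x c2 i = Qmat (y i) (x i) - c2 i *\<^sub>R mat 1"

lemma shifted_cost_symmetric: "transpose (shifted_cost y x c2 i) = shifted_cost y x c2 i"
  by (simp add: shifted_cost_def transpose_diff transpose_scalar Qmat_symmetric)

lemma quadratic_shifted_cost:
  "w \<bullet> (shifted_cost y x c2 i *v w) = w \<bullet> (Qmat (y i) (x i) *v w) - c2 i * (w \<bullet> w)"
  by (simp add: shifted_cost_def matrix_vector_mult_diff_rdistrib inner_diff_right
      scaleR_matrix_vector_assoc[symmetric])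

lemma relax_obj_block_sym:
  assumes "block_sym l W"
  shows "relax_obj l y x c2 W = (\<Sum>i=1..l. inner (shifted_cost y x c2 i) (W 0 i)) + (\<Sum>i=1..l. c2 i)"
proof -
  let ?H = "shifted_cost y x c2"
  have "block_trprod l (bigQ l y x c2) W = trace (bigQ l y x c2 0 0 ** W 0 0) +
      (\<Sum>i=1..l. trace (bigQ l y x c2 0 i ** W i 0) + trace (bigQ l y x c2 i 0 ** W 0 i)
        + trace (bigQ l y x c2 i i ** W i i))"
    unfolding block_trprod_def by (rule sum_arrow_blocks) (simp add: bigQ_def trace_def)
  also have "\<dots> = (\<Sum>i=1..l. inner (?H i) (W 0 i))"
  proof -
    have zero: "trace (0 ** X) = 0" "trace (0 :: real^4^4) = 0" for X :: "real^4^4"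
      by (simp_all add: trace_def matrix_matrix_mult_def)
    have "trace (bigQ l y x c2 0 i ** W i 0) + trace (bigQ l y x c2 i 0 ** W 0 i)
        + trace (bigQ l y x c2 i i ** W i i) = inner (?H i) (W 0 i)" if i: "i \<in> {1..l}" for i
    proof -
      have "W i 0 = transpose (W 0 i)" using block_symD[OF assms, of 0 i] i by simp
      then have "trace (?H i ** W i 0) + trace (?H i ** W 0 i) = 2 * inner (?H i) (W 0 i)"
        using shifted_cost_symmetric by (simp add: trace_matrix_mult inner_transpose)
      then show ?thesis
        using i by (simp add: bigQ_def zero flip: shifted_cost_def scalar_matrix_assoc add: trace_scaleR; linarith)
    qed
    then show ?thesis by (simp add: bigQ_def zero)
  qed
  finally show ?thesis by (simp add: relax_obj_def)
qed

lemma outer_blocks_eq_outer: "outer_blocks om i j = outer (om i) (om j)"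
  by (simp add: outer_blocks_def outer_def)

lemma block_sym_outer_blocks: "block_sym l (outer_blocks om)"
  by (simp add: block_sym_def outer_blocks_def transpose_def mult.commute)

lemma quadratic_outer: "u \<bullet> (outer v w *v z) = (u \<bullet> v) * (w \<bullet> z)"
  by (simp add: outer_def inner_vec_def matrix_vector_mult_def sum_distrib_left sum_distrib_right
      algebra_simps) (rule sum.swap)

lemma block_psd_outer_blocks: "block_psd l (outer_blocks om)"
proof -
  have "(\<Sum>a\<le>l. \<Sum>b\<le>l. z a \<bullet> (outer_blocks om a b *v z b)) = (\<Sum>a\<le>l. z a \<bullet> om a)\<^sup>2" for z
    by (simp add: outer_blocks_eq_outer quadratic_outer sum_product power2_eq_square inner_commute)
  then show ?thesis by (simp add: block_psd_def block_sym_outer_blocks)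
qed

lemma outer_0 [simp]: "outer 0 v = 0" "outer u 0 = 0"
  by (simp_all add: outer_def vec_eq_iff)

lemma trace_outer: "trace (outer u v) = u \<bullet> v"
  by (simp add: trace_def outer_def inner_vec_def)

lemma sdr_feasible_outer_blocks: "qcqp_feasible l om \<Longrightarrow> sdr_feasible l (outer_blocks om)"
  by (simp add: qcqp_feasible_def sdr_feasible_def block_psd_outer_blocks)

lemma relax_obj_outer_blocks:
  "relax_obj l y x c2 (outer_blocks om)
     = (\<Sum>i=1..l. om 0 \<bullet> (shifted_cost y x c2 i *v om i)) + (\<Sum>i=1..l. c2 i)"
  by (simp add: relax_obj_block_sym[OF block_sym_outer_blocks] outer_blocks_eq_outer inner_outer)

lemma qcqp_feasibleD:
  assumes "qcqp_feasible l om"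
  shows "norm (om 0) = 1" and "i \<in> {1..l} \<Longrightarrow> om i = 0 \<or> om i = om 0"
proof -
  show "norm (om 0) = 1"
    using assms by (simp add: qcqp_feasible_def outer_blocks_eq_outer trace_outer norm_eq_1)
next
  assume "i \<in> {1..l}"
  then have entries: "om 0 $ a * om i $ b = om i $ a * om i $ b" for a b
    using assms by (auto simp: qcqp_feasible_def outer_blocks_def vec_eq_iff)
  show "om i = 0 \<or> om i = om 0"
  proof (cases "om i = 0")
    case False
    then obtain b where "om i $ b \<noteq> 0" by (auto simp: vec_eq_iff)
    then have "om 0 $ a = om i $ a" for a using entries[of a b] by simp
    then show ?thesis by (simp add: vec_eq_iff)
  qed simp
qed

lemma tls_obj_le_relax_obj:
  assumes "qcqp_feasible l om"
  shows "tls_obj l y x c2 (om 0) \<le> relax_obj l y x c2 (outer_blocks om)"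
proof -
  have unit: "om 0 \<bullet> om 0 = 1" using qcqp_feasibleD(1)[OF assms] by (simp add: norm_eq_1)
  have "tls_obj l y x c2 (om 0) \<le> (\<Sum>i=1..l. om 0 \<bullet> (shifted_cost y x c2 i *v om i) + c2 i)"
    unfolding tls_obj_def
  proof (rule sum_mono)
    fix i assume "i \<in> {1..l}"
    then show "min (om 0 \<bullet> (Qmat (y i) (x i) *v om 0)) (c2 i)
        \<le> om 0 \<bullet> (shifted_cost y x c2 i *v om i) + c2 i"
      using qcqp_feasibleD(2)[OF assms \<open>i \<in> {1..l}\<close>] unit
      by (auto simp: quadratic_shifted_cost min_le_iff_disj)
  qed
  then show ?thesis by (simp add: relax_obj_outer_blocks sum.distrib)
qed

lemma tls_obj_inliers_outliers:
  assumes "k \<le> l"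
    and "\<forall>i\<in>{1..k}. w \<bullet> (Qmat (y i) (x i) *v w) \<le> c2 i"
    and "\<forall>j\<in>{k+1..l}. w \<bullet> (Qmat (y j) (x j) *v w) \<ge> c2 j"
  shows "tls_obj l y x c2 w = (\<Sum>i=1..k. w \<bullet> (Qmat (y i) (x i) *v w) - c2 i) + (\<Sum>i=1..l. c2 i)"
proof -
  have "tls_obj l y x c2 w = (\<Sum>i=1..k. w \<bullet> (Qmat (y i) (x i) *v w)) + (\<Sum>i=k+1..l. c2 i)"
    unfolding tls_obj_def sum_atLeastAtMost_split[OF assms(1)] using assms(2,3)
    by (intro arg_cong2[where f = "(+)"] sum.cong) auto
  then show ?thesis using sum_atLeastAtMost_split[OF assms(1), of c2] by (simp add: sum_subtractf)
qed

definition inlier_lift :: "nat \<Rightarrow> real^4 \<Rightarrow> nat \<Rightarrow> real^4" where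
  "inlier_lift k w i = (if i \<le> k then w else 0)"

lemma qcqp_feasible_inlier_lift: "norm w = 1 \<Longrightarrow> qcqp_feasible l (inlier_lift k w)"
  by (simp add: qcqp_feasible_def outer_blocks_eq_outer trace_outer inlier_lift_def norm_eq_1)

lemma relax_obj_inlier_lift:
  assumes "k \<le> l" "norm w = 1"
  shows "relax_obj l y x c2 (outer_blocks (inlier_lift k w))
    = (\<Sum>i=1..k. w \<bullet> (Qmat (y i) (x i) *v w) - c2 i) + (\<Sum>i=1..l. c2 i)"
proof -
  have "relax_obj l y x c2 (outer_blocks (inlier_lift k w))
      = (\<Sum>i=1..k. w \<bullet> (shifted_cost y x c2 i *v inlier_lift k w i))
        + (\<Sum>i=k+1..l. w \<bullet> (shifted_cost y x c2 i *v inlier_lift k w i)) + (\<Sum>i=1..l. c2 i)"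
    unfolding relax_obj_outer_blocks sum_atLeastAtMost_split[OF assms(1)]
    by (simp add: inlier_lift_def[of k w 0])
  also have "(\<Sum>i=k+1..l. w \<bullet> (shifted_cost y x c2 i *v inlier_lift k w i)) = 0"
    by (simp add: inlier_lift_def)
  also have "(\<Sum>i=1..k. w \<bullet> (shifted_cost y x c2 i *v inlier_lift k w i))
      = (\<Sum>i=1..k. w \<bullet> (Qmat (y i) (x i) *v w) - c2 i)"
    using assms(2) by (intro sum.cong) (auto simp: inlier_lift_def quadratic_shifted_cost norm_eq_1)
  finally show ?thesis by simp
qed

section \<open>Weak duality\<close>

lemma admissible_dualD:
  assumes "admissible_dual l D"
  shows admissible_dual_00: "D 0 0 = 0"
    and admissible_dual_off_arrow: "\<lbrakk>a \<le> l; b \<le> l; a \<noteq> 0; b \<noteq> 0; a \<noteq> b\<rbrakk> \<Longrightarrow> D a b = 0"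
    and admissible_dual_diagonal: "i \<in> {1..l} \<Longrightarrow> D i i = - (2 *\<^sub>R D 0 i)"
    and admissible_dual_column: "i \<le> l \<Longrightarrow> D i 0 = transpose (D 0 i)"
    and admissible_dual_symmetric: "i \<in> {1..l} \<Longrightarrow> transpose (D 0 i) = D 0 i"
proof -
  have sym: "block_sym l D" and diag: "\<forall>i\<in>{1..l}. D i i + 2 *\<^sub>R D 0 i = 0"
    and zero: "\<forall>i\<le>l. \<forall>j\<le>l. \<not> (1 \<le> i \<and> (j = i \<or> j = 0)) \<and> \<not> (i = 0 \<and> 1 \<le> j) \<longrightarrow> D i j = 0"
    using assms by (simp_all add: admissible_dual_def)
  show "D 0 0 = 0" using zero by simp
  show "\<lbrakk>a \<le> l; b \<le> l; a \<noteq> 0; b \<noteq> 0; a \<noteq> b\<rbrakk> \<Longrightarrow> D a b = 0" using zero by auto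
  show diag_i: "i \<in> {1..l} \<Longrightarrow> D i i = - (2 *\<^sub>R D 0 i)" for i
    using diag by (simp add: eq_neg_iff_add_eq_0)
  show "i \<le> l \<Longrightarrow> D i 0 = transpose (D 0 i)" using block_symD[OF sym, of 0 i] by simp
  assume "i \<in> {1..l}"
  then have "- (2 *\<^sub>R D 0 i) = transpose (- (2 *\<^sub>R D 0 i))"
    using block_symD[OF sym, of i i] diag_i by simp
  then show "transpose (D 0 i) = D 0 i" by (simp add: transpose_scalar transpose_def vec_eq_iff)
qed

text \<open>The slack matrix \<open>\<Q> - \<D> - \<mu> E\<^sub>0\<^sub>0\<close> of the dual of (SDR).\<close>
definition dual_slack ::
  "nat \<Rightarrow> (nat \<Rightarrow> real^3) \<Rightarrow> (nat \<Rightarrow> real^3) \<Rightarrow> (nat \<Rightarrow> real) \<Rightarrow> real \<Rightarrow>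
     (nat \<Rightarrow> nat \<Rightarrow> real^4^4) \<Rightarrow> nat \<Rightarrow> nat \<Rightarrow> real^4^4" where
  "dual_slack l y x c2 mu D a b =
     bigQ l y x c2 a b - D a b - (if a = 0 \<and> b = 0 then mu *\<^sub>R mat 1 else 0)"

lemma dual_slack_00: "admissible_dual l D \<Longrightarrow> dual_slack l y x c2 mu D 0 0 = (- mu) *\<^sub>R mat 1"
  by (simp add: dual_slack_def bigQ_def admissible_dual_00)

lemma dual_slack_blocks:
  assumes "admissible_dual l D" "i \<in> {1..l}"
  shows "dual_slack l y x c2 mu D 0 i = (1/2) *\<^sub>R shifted_cost y x c2 i - D 0 i"
    and "dual_slack l y x c2 mu D i 0 = (1/2) *\<^sub>R shifted_cost y x c2 i - D 0 i"
    and "dual_slack l y x c2 mu D i i = 2 *\<^sub>R D 0 i"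
  using assms admissible_dual_diagonal[OF assms]
    admissible_dual_column[OF assms(1), of i] admissible_dual_symmetric[OF assms]
  by (auto simp: dual_slack_def bigQ_def shifted_cost_def)

lemma dual_slack_off_arrow:
  "admissible_dual l D \<Longrightarrow> a \<le> l \<Longrightarrow> b \<le> l \<Longrightarrow> a \<noteq> 0 \<Longrightarrow> b \<noteq> 0 \<Longrightarrow> a \<noteq> b \<Longrightarrow>
     dual_slack l y x c2 mu D a b = 0"
  by (simp add: dual_slack_def bigQ_def admissible_dual_off_arrow)

lemma dual_slack_quadratic_form:
  assumes "admissible_dual l D"
  shows "(\<Sum>a\<le>l. \<Sum>b\<le>l. z a \<bullet> (dual_slack l y x c2 mu D a b *v z b))
    = - mu * (norm (z 0))\<^sup>2 + 2 * (\<Sum>i=1..l. z i \<bullet> (D 0 i *v z i))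
      - (\<Sum>i=1..l. z 0 \<bullet> ((2 *\<^sub>R D 0 i - Qmat (y i) (x i) + c2 i *\<^sub>R mat 1) *v z i))"
proof -
  let ?S = "dual_slack l y x c2 mu D"
  have "z 0 \<bullet> (?S 0 i *v z i) + z i \<bullet> (?S i 0 *v z 0) + z i \<bullet> (?S i i *v z i)
      = 2 * (z i \<bullet> (D 0 i *v z i))
        - z 0 \<bullet> ((2 *\<^sub>R D 0 i - Qmat (y i) (x i) + c2 i *\<^sub>R mat 1) *v z i)"
    if i: "i \<in> {1..l}" for i
  proof -
    have swap: "z i \<bullet> (?S i 0 *v z 0) = z 0 \<bullet> (?S 0 i *v z i)"
      using symmetric_bilinear[of "?S 0 i"] dual_slack_blocks[OF assms i]
        shifted_cost_symmetric admissible_dual_symmetric[OF assms i]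
      by (simp add: transpose_diff transpose_scalar)
    have cost: "2 *\<^sub>R D 0 i - Qmat (y i) (x i) + c2 i *\<^sub>R mat 1 = 2 *\<^sub>R D 0 i - shifted_cost y x c2 i"
      by (simp add: shifted_cost_def)
    show ?thesis
      unfolding swap cost using dual_slack_blocks[OF assms i]
      by (simp add: matrix_vector_mult_diff_rdistrib inner_diff_right
          scaleR_matrix_vector_assoc[symmetric])
  qed
  moreover have "z 0 \<bullet> (?S 0 0 *v z 0) = - mu * (norm (z 0))\<^sup>2"
    by (simp only: dual_slack_00[OF assms] scaleR_matrix_vector_assoc[symmetric])
      (simp add: power2_norm_eq_inner)
  ultimately show ?thesis
    by (simp add: sum_arrow_blocks dual_slack_off_arrow[OF assms] sum_subtractf sum_distrib_left)
qed

lemma dual_slack_pairing: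
  assumes "admissible_dual l D" "sdr_feasible l W"
  shows "(\<Sum>a\<le>l. \<Sum>b\<le>l. inner (dual_slack l y x c2 mu D a b) (W a b))
    = relax_obj l y x c2 W - (\<Sum>i=1..l. c2 i) - mu"
proof -
  let ?S = "dual_slack l y x c2 mu D"
  have sym: "block_sym l W" and W0i: "\<forall>i\<in>{1..l}. W 0 i = W i i" and tr: "trace (W 0 0) = 1"
    using assms(2) by (simp_all add: sdr_feasible_def block_psd_def)
  have "inner (?S 0 i) (W 0 i) + inner (?S i 0) (W i 0) + inner (?S i i) (W i i)
      = inner (shifted_cost y x c2 i) (W 0 i)" if i: "i \<in> {1..l}" for i
  proof -
    have "W i 0 = transpose (W 0 i)" using block_symD[OF sym, of 0 i] i by simp
    then have "inner (?S i 0) (W i 0) = inner (?S 0 i) (W 0 i)"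
      using dual_slack_blocks[OF assms(1) i] shifted_cost_symmetric
        admissible_dual_symmetric[OF assms(1) i]
      by (simp add: inner_transpose transpose_diff transpose_scalar)
    then show ?thesis using dual_slack_blocks[OF assms(1) i] W0i i
      by (simp add: inner_diff_left)
  qed
  moreover have "inner (?S 0 0) (W 0 0) = - mu"
    using tr by (simp add: dual_slack_00[OF assms(1)] trace_eq_inner_mat_1 inner_commute)
  ultimately show ?thesis
    by (simp add: sum_arrow_blocks dual_slack_off_arrow[OF assms(1)] relax_obj_block_sym[OF sym])
qed

lemma relax_obj_lower_bound:
  assumes "admissible_dual l D"
    and slack_psd: "\<And>z. 0 \<le> (\<Sum>a\<le>l. \<Sum>b\<le>l. z a \<bullet> (dual_slack l y x c2 mu D a b *v z b))"
    and "sdr_feasible l W"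
  shows "mu + (\<Sum>i=1..l. c2 i) \<le> relax_obj l y x c2 W"
proof -
  have "block_psd l W" using assms(3) by (simp add: sdr_feasible_def)
  with slack_psd have "0 \<le> (\<Sum>a\<le>l. \<Sum>b\<le>l. inner (dual_slack l y x c2 mu D a b) (W a b))"
    by (rule block_frobenius_nonneg)
  then show ?thesis by (simp add: dual_slack_pairing[OF assms(1,3)])
qed

section \<open>Strong duality\<close>

lemma quadratic_sandwich_inverse_le:
  fixes W B Y :: "real^'n^'n"
  assumes "psd Y" "psd (W - Y)" "W ** B = mat 1" "transpose B = B"
  shows "(Y *v x) \<bullet> (B *v (Y *v x)) \<le> x \<bullet> (Y *v x)"
proof -
  define c where "c = B *v (Y *v x)"
  have "W *v (B *v v) = v" for v by (metis assms(3) matrix_vector_mul_assoc matrix_vector_mul_lid)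
  then have Wc: "W *v c = Y *v x" by (simp add: c_def)
  have cY: "c \<bullet> (Y *v c) \<le> c \<bullet> (Y *v x)"
    using psd_nonneg[OF assms(2), of c] Wc by (simp add: matrix_vector_mult_diff_rdistrib inner_diff_right)
  have "0 \<le> c \<bullet> (Y *v c)" by (rule psd_nonneg[OF assms(1)])
  have "(c \<bullet> (Y *v x))\<^sup>2 \<le> (c \<bullet> (Y *v c)) * (x \<bullet> (Y *v x))" by (rule psd_Cauchy_Schwarz[OF assms(1)])
  also have "\<dots> \<le> (c \<bullet> (Y *v x)) * (x \<bullet> (Y *v x))"
    using cY psd_nonneg[OF assms(1), of x] by (rule mult_right_mono)
  finally have "c \<bullet> (Y *v x) \<le> x \<bullet> (Y *v x)"
    using \<open>0 \<le> c \<bullet> (Y *v c)\<close> cY psd_nonneg[OF assms(1), of x]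
    by (cases "c \<bullet> (Y *v x) = 0") (auto simp: power2_eq_square)
  then show ?thesis by (simp add: c_def inner_commute)
qed

text \<open>Off the first block row and column this is \<open>Y\<^sub>a W\<^sup>-\<^sup>1 Y\<^sub>b\<close>, the completion whose Schur
  complement with respect to \<open>W\<close> vanishes; the diagonal is then raised to \<open>Y\<^sub>a\<close>, which keeps
  positivity because \<open>Y\<^sub>a W\<^sup>-\<^sup>1 Y\<^sub>a \<preceq> Y\<^sub>a\<close>.\<close>
definition schur_completion ::
  "real^'n^'n \<Rightarrow> real^'n^'n \<Rightarrow> (nat \<Rightarrow> real^'n^'n) \<Rightarrow> nat \<Rightarrow> nat \<Rightarrow> real^'n^'n" where
  "schur_completion W B Y a b =
     (if a = 0 then (if b = 0 then W else Y b) else if b = 0 then Y a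
      else Y a ** B ** Y b + (if a = b then Y a - Y a ** B ** Y a else 0))"

lemma quadratic_form_schur_completion:
  fixes W B :: "real^'n^'n" and l :: nat and z :: "nat \<Rightarrow> real^'n"
  assumes "transpose W = W" "W ** B = mat 1" "transpose B = B"
    and sym: "\<And>i. i \<in> {1..l} \<Longrightarrow> transpose (Y i) = Y i"
  shows "(\<Sum>a\<le>l. \<Sum>b\<le>l. z a \<bullet> (schur_completion W B Y a b *v z b))
    = (z 0 + B *v (\<Sum>j=1..l. Y j *v z j)) \<bullet> (W *v (z 0 + B *v (\<Sum>j=1..l. Y j *v z j)))
      + (\<Sum>a=1..l. z a \<bullet> (Y a *v z a) - (Y a *v z a) \<bullet> (B *v (Y a *v z a)))"
proof -
  define s where "s = (\<Sum>j=1..l. Y j *v z j)"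
  let ?C = "schur_completion W B Y"
  let ?d = "\<lambda>a. z a \<bullet> (Y a *v z a) - (Y a *v z a) \<bullet> (B *v (Y a *v z a))"
  have YBY: "z a \<bullet> ((Y a ** B ** Y b) *v z b) = (Y a *v z a) \<bullet> (B *v (Y b *v z b))"
    if "a \<in> {1..l}" for a b
    using symmetric_bilinear[OF sym[OF that], of "z a" "B *v (Y b *v z b)"]
    by (simp add: matrix_vector_mul_assoc[symmetric] inner_commute)
  have row: "(\<Sum>b\<le>l. z a \<bullet> (?C a b *v z b))
      = z a \<bullet> (Y a *v z 0) + (Y a *v z a) \<bullet> (B *v s) + ?d a" if a: "a \<in> {1..l}" for a
  proof -
    have "(\<Sum>b=1..l. z a \<bullet> (?C a b *v z b))
        = (\<Sum>b=1..l. (Y a *v z a) \<bullet> (B *v (Y b *v z b)) + (if a = b then ?d a else 0))"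
      using a YBY[OF a] by (intro sum.cong)
        (auto simp: schur_completion_def matrix_vector_mult_add_rdistrib
          matrix_vector_mult_diff_rdistrib inner_diff_right)
    also have "\<dots> = (Y a *v z a) \<bullet> (B *v s) + ?d a"
      using a by (simp add: sum.distrib s_def matrix_vector_mult_sum inner_sum_right)
    finally show ?thesis using a by (simp add: sum_atMost_split_0 schur_completion_def)
  qed
  have "(\<Sum>a\<le>l. \<Sum>b\<le>l. z a \<bullet> (?C a b *v z b))
      = (\<Sum>b\<le>l. z 0 \<bullet> (?C 0 b *v z b)) + (\<Sum>a=1..l. \<Sum>b\<le>l. z a \<bullet> (?C a b *v z b))"
    by (rule sum_atMost_split_0)
  also have "(\<Sum>b\<le>l. z 0 \<bullet> (?C 0 b *v z b)) = z 0 \<bullet> (W *v z 0) + z 0 \<bullet> s"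
    by (simp add: sum_atMost_split_0 schur_completion_def s_def inner_sum_right)
  also have "(\<Sum>a=1..l. \<Sum>b\<le>l. z a \<bullet> (?C a b *v z b))
      = (\<Sum>a=1..l. z a \<bullet> (Y a *v z 0)) + (\<Sum>a=1..l. (Y a *v z a) \<bullet> (B *v s)) + (\<Sum>a=1..l. ?d a)"
    by (simp add: row sum.distrib)
  also have "(\<Sum>a=1..l. z a \<bullet> (Y a *v z 0)) = z 0 \<bullet> s"
    unfolding s_def inner_sum_right by (intro sum.cong refl) (metis symmetric_bilinear sym)
  also have "(\<Sum>a=1..l. (Y a *v z a) \<bullet> (B *v s)) = s \<bullet> (B *v s)"
    by (simp add: s_def inner_sum_left)
  also have "z 0 \<bullet> (W *v z 0) + z 0 \<bullet> s + (z 0 \<bullet> s + s \<bullet> (B *v s) + (\<Sum>a=1..l. ?d a))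
      = (z 0 + B *v s) \<bullet> (W *v (z 0 + B *v s)) + (\<Sum>a=1..l. ?d a)"
  proof -
    have WBs: "W *v (B *v s) = s" by (metis assms(2) matrix_vector_mul_assoc matrix_vector_mul_lid)
    have "(B *v s) \<bullet> (W *v z 0) = z 0 \<bullet> s"
      using symmetric_bilinear[OF assms(1), of "B *v s" "z 0"] WBs by simp
    then show ?thesis
      by (simp add: matrix_vector_right_distrib inner_add_left inner_add_right WBs inner_commute)
  qed
  finally show ?thesis by (simp only: s_def)
qed

lemma block_sym_schur_completion:
  assumes "transpose W = W" "transpose B = B" "\<And>i. i \<in> {1..l} \<Longrightarrow> transpose (Y i) = Y i"
  shows "block_sym l (schur_completion W B Y)"
  unfolding block_sym_def
proof (intro allI impI)
  fix i j assume "i \<le> l" "j \<le> l"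
  show "schur_completion W B Y j i = transpose (schur_completion W B Y i j)"
  proof (cases "i = 0 \<or> j = 0 \<or> i = j")
    case True
    then show ?thesis
      using assms \<open>i \<le> l\<close> \<open>j \<le> l\<close> by (auto simp: schur_completion_def)
  next
    case False
    then have "i \<in> {1..l}" "j \<in> {1..l}" using \<open>i \<le> l\<close> \<open>j \<le> l\<close> by auto
    then show ?thesis using False assms(2) assms(3)[of i] assms(3)[of j]
      by (simp add: schur_completion_def matrix_transpose_mul matrix_mul_assoc)
  qed
qed

lemma sdr_feasible_completion:
  assumes "positive_definite W" "trace W = 1" and Y: "\<forall>i\<in>{1..l}. psd (Y i) \<and> psd (W - Y i)"
  obtains Wf where "sdr_feasible l Wf" "\<And>i. i \<in> {1..l} \<Longrightarrow> Wf 0 i = Y i"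
proof -
  obtain B where WB: "W ** B = mat 1" and symB: "transpose B = B"
    using positive_definite_inverse[OF assms(1)] .
  have symW: "transpose W = W" using assms(1) by (simp add: positive_definite_def)
  have symY: "transpose (Y i) = Y i" if "i \<in> {1..l}" for i using Y that psd_symmetric by blast
  define Wf where "Wf = schur_completion W B Y"
  have diag: "Wf i i = Y i" if "1 \<le> i" for i using that by (simp add: Wf_def schur_completion_def)
  have "block_sym l Wf" unfolding Wf_def by (rule block_sym_schur_completion[OF symW symB symY])
  moreover have "0 \<le> (\<Sum>a\<le>l. \<Sum>b\<le>l. z a \<bullet> (Wf a b *v z b))" for z
  proof -
    let ?u = "z 0 + B *v (\<Sum>j=1..l. Y j *v z j)"
    have "(\<Sum>a\<le>l. \<Sum>b\<le>l. z a \<bullet> (Wf a b *v z b))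
        = ?u \<bullet> (W *v ?u) + (\<Sum>a=1..l. z a \<bullet> (Y a *v z a) - (Y a *v z a) \<bullet> (B *v (Y a *v z a)))"
      unfolding Wf_def by (rule quadratic_form_schur_completion[OF symW WB symB symY])
    moreover have "0 \<le> ?u \<bullet> (W *v ?u)"
      by (rule psd_nonneg[OF positive_definite_imp_psd[OF assms(1)]])
    moreover have "0 \<le> (\<Sum>a=1..l. z a \<bullet> (Y a *v z a) - (Y a *v z a) \<bullet> (B *v (Y a *v z a)))"
      using quadratic_sandwich_inverse_le[OF _ _ WB symB] Y by (intro sum_nonneg) simp
    ultimately show ?thesis by simp
  qed
  ultimately have "sdr_feasible l Wf"
    using diag assms(2) by (simp add: sdr_feasible_def block_psd_def Wf_def schur_completion_def)
  moreover have "Wf 0 i = Y i" if "i \<in> {1..l}" for i using that by (simp add: Wf_def schur_completion_def)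
  ultimately show thesis by (rule that)
qed

lemma reduced_primal_bound:
  assumes bound: "\<And>W. sdr_feasible l W \<Longrightarrow> mu + (\<Sum>i=1..l. c2 i) \<le> relax_obj l y x c2 W"
    and W: "positive_definite W" and Y: "\<forall>i\<in>{1..l}. psd (Y i) \<and> psd (W - Y i)"
  shows "mu * trace W \<le> (\<Sum>i=1..l. inner (shifted_cost y x c2 i) (Y i))"
proof -
  define \<tau> where "\<tau> = trace W"
  have "0 < \<tau>" unfolding \<tau>_def by (rule positive_definite_trace_pos[OF W])
  have "positive_definite ((1 / \<tau>) *\<^sub>R W)" using W \<open>0 < \<tau>\<close> by (simp add: positive_definite_scaleR)
  moreover have "trace ((1 / \<tau>) *\<^sub>R W) = 1" using \<open>0 < \<tau>\<close> by (simp add: trace_scaleR \<tau>_def)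
  moreover have "\<forall>i\<in>{1..l}. psd ((1 / \<tau>) *\<^sub>R Y i) \<and> psd ((1 / \<tau>) *\<^sub>R W - (1 / \<tau>) *\<^sub>R Y i)"
    using Y \<open>0 < \<tau>\<close> by (auto intro!: psd_scaleR simp flip: scaleR_diff_right)
  ultimately obtain Wf where Wf: "sdr_feasible l Wf" "\<And>i. i \<in> {1..l} \<Longrightarrow> Wf 0 i = (1 / \<tau>) *\<^sub>R Y i"
    using sdr_feasible_completion[where W = "(1 / \<tau>) *\<^sub>R W" and Y = "\<lambda>i. (1 / \<tau>) *\<^sub>R Y i"]
    by blast
  have "relax_obj l y x c2 Wf = (\<Sum>i=1..l. inner (shifted_cost y x c2 i) (Y i)) / \<tau> + (\<Sum>i=1..l. c2 i)"
  proof -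
    have "block_sym l Wf" using Wf(1) by (simp add: sdr_feasible_def block_psd_def)
    moreover have "(\<Sum>i=1..l. inner (shifted_cost y x c2 i) (Wf 0 i))
        = (\<Sum>i=1..l. inner (shifted_cost y x c2 i) (Y i) / \<tau>)"
      by (intro sum.cong) (simp_all add: Wf(2))
    ultimately show ?thesis by (simp add: relax_obj_block_sym sum_divide_distrib)
  qed
  with bound[OF Wf(1)] have "mu \<le> (\<Sum>i=1..l. inner (shifted_cost y x c2 i) (Y i)) / \<tau>" by simp
  then show ?thesis using \<open>0 < \<tau>\<close> by (simp add: \<tau>_def pos_le_divide_eq)
qed

text \<open>Then \<open>2[\<D>]\<^sub>0\<^sub>i - H\<^sub>i = 2 R\<^sub>i\<close> and \<open>2[\<D>]\<^sub>0\<^sub>i + H\<^sub>i = 2 (R\<^sub>i + H\<^sub>i)\<close>, which turns (O1) into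
  complementary slackness for the multipliers.\<close>
definition multiplier_dual :: "(nat \<Rightarrow> real^4^4) \<Rightarrow> (nat \<Rightarrow> real^4^4) \<Rightarrow> nat \<Rightarrow> nat \<Rightarrow> real^4^4" where
  "multiplier_dual H R a b =
     (if a = 0 then (if b = 0 then 0 else (1/2) *\<^sub>R H b + R b)
      else if b = 0 then (1/2) *\<^sub>R H a + R a
      else if a = b then - (2 *\<^sub>R ((1/2) *\<^sub>R H a + R a)) else 0)"

lemma admissible_multiplier_dual:
  assumes "\<And>i. i \<in> {1..l} \<Longrightarrow> transpose (H i) = H i \<and> transpose (R i) = R i"
  shows "admissible_dual l (multiplier_dual H R)"
proof -
  have "block_sym l (multiplier_dual H R)"
    unfolding block_sym_def
  proof (intro allI impI)
    fix i j assume "i \<le> l" "j \<le> l"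
    consider "i = 0" "j = 0" | "i = 0" "j \<in> {1..l}" | "i \<in> {1..l}" "j = 0"
      | "i \<in> {1..l}" "j \<in> {1..l}" using \<open>i \<le> l\<close> \<open>j \<le> l\<close> by fastforce
    then show "multiplier_dual H R j i = transpose (multiplier_dual H R i j)"
      by cases (use assms in \<open>auto simp: multiplier_dual_def transpose_add transpose_scalar\<close>)
  qed
  then show ?thesis by (auto simp: admissible_dual_def multiplier_dual_def)
qed

lemma quadratic_multiplier_decomposition:
  assumes "(- mu) *\<^sub>R mat 1 = P + (\<Sum>i=1..l. R i)"
  shows "v \<bullet> (P *v v) = - mu * (v \<bullet> v) - (\<Sum>i=1..l. v \<bullet> (R i *v (v :: real^'n)))"
proof -
  have "v \<bullet> (((- mu) *\<^sub>R mat 1) *v v) = - mu * (v \<bullet> v)"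
    by (simp only: scaleR_matrix_vector_assoc[symmetric]) simp
  then show ?thesis unfolding assms
    by (simp add: matrix_vector_mult_add_rdistrib inner_add_right inner_sum_right sum_matrix_vector_mult)
qed

lemma multiplier_dual_slack_nonneg:
  fixes R :: "nat \<Rightarrow> real^4^4"
  assumes "psd P" and R: "\<And>i. i \<in> {1..l} \<Longrightarrow> R i \<in> loewner_upper_bounds (shifted_cost y x c2 i)"
    and decomp: "(- mu) *\<^sub>R mat 1 = P + (\<Sum>i=1..l. R i)"
  shows "0 \<le> (\<Sum>a\<le>l. \<Sum>b\<le>l. z a \<bullet> (dual_slack l y x c2 mu (multiplier_dual (shifted_cost y x c2) R) a b *v z b))"
proof -
  let ?D = "multiplier_dual (shifted_cost y x c2) R"
  have adm: "admissible_dual l ?D"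
    using R by (intro admissible_multiplier_dual)
      (simp add: shifted_cost_symmetric loewner_upper_bounds_def psd_symmetric)
  have summand: "2 * (z i \<bullet> (?D 0 i *v z i))
      - z 0 \<bullet> ((2 *\<^sub>R ?D 0 i - Qmat (y i) (x i) + c2 i *\<^sub>R mat 1) *v z i)
    = z i \<bullet> ((R i + shifted_cost y x c2 i) *v z i) + (z i - z 0) \<bullet> (R i *v (z i - z 0)) - z 0 \<bullet> (R i *v z 0)"
    if i: "i \<in> {1..l}" for i
  proof -
    have swap: "z i \<bullet> (R i *v z 0) = z 0 \<bullet> (R i *v z i)"
      using R[OF i] by (intro symmetric_bilinear) (simp add: loewner_upper_bounds_def psd_symmetric)
    have cost: "2 *\<^sub>R ?D 0 i - Qmat (y i) (x i) + c2 i *\<^sub>R mat 1 = 2 *\<^sub>R R i"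
      using i by (simp add: multiplier_dual_def shifted_cost_def algebra_simps)
    show ?thesis
      unfolding cost using i swap by (simp add: multiplier_dual_def matrix_vector_mult_add_rdistrib
          matrix_vector_right_distrib matrix_vector_mult_diff_rdistrib inner_add_left inner_add_right
          inner_diff_left inner_diff_right scaleR_matrix_vector_assoc[symmetric] algebra_simps)
  qed
  have Pz: "z 0 \<bullet> (P *v z 0) = - mu * (z 0 \<bullet> z 0) - (\<Sum>i=1..l. z 0 \<bullet> (R i *v z 0))"
    by (rule quadratic_multiplier_decomposition[OF decomp])
  let ?B = "\<lambda>i. 2 * (z i \<bullet> (?D 0 i *v z i))
      - z 0 \<bullet> ((2 *\<^sub>R ?D 0 i - Qmat (y i) (x i) + c2 i *\<^sub>R mat 1) *v z i)"
  let ?T = "\<lambda>i. z i \<bullet> ((R i + shifted_cost y x c2 i) *v z i) + (z i - z 0) \<bullet> (R i *v (z i - z 0))"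
  have "- mu * (norm (z 0))\<^sup>2 + 2 * (\<Sum>i=1..l. z i \<bullet> (?D 0 i *v z i))
      - (\<Sum>i=1..l. z 0 \<bullet> ((2 *\<^sub>R ?D 0 i - Qmat (y i) (x i) + c2 i *\<^sub>R mat 1) *v z i))
    = - mu * (z 0 \<bullet> z 0) + (\<Sum>i=1..l. ?B i)"
    by (simp add: sum_subtractf sum_distrib_left power2_norm_eq_inner)
  also have "(\<Sum>i=1..l. ?B i) = (\<Sum>i=1..l. ?T i - z 0 \<bullet> (R i *v z 0))"
    by (intro sum.cong) (simp_all add: summand)
  also have "- mu * (z 0 \<bullet> z 0) + \<dots> = z 0 \<bullet> (P *v z 0) + (\<Sum>i=1..l. ?T i)"
    using Pz by (simp add: sum_subtractf)
  also have "0 \<le> \<dots>"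
    using \<open>psd P\<close> R by (intro add_nonneg_nonneg sum_nonneg psd_nonneg) (auto simp: loewner_upper_bounds_def)
  finally show ?thesis unfolding dual_slack_quadratic_form[OF adm] by simp
qed

lemma multiplier_complementary_slackness:
  assumes "k \<le> l" "norm w = 1" "psd P"
    and R: "\<And>i. i \<in> {1..l} \<Longrightarrow> R i \<in> loewner_upper_bounds (shifted_cost y x c2 i)"
    and decomp: "(- mu) *\<^sub>R mat 1 = P + (\<Sum>i=1..l. R i)"
    and mu: "mu = (\<Sum>i=1..k. w \<bullet> (Qmat (y i) (x i) *v w) - c2 i)"
  shows "\<And>i. i \<in> {1..k} \<Longrightarrow> (R i + shifted_cost y x c2 i) *v w = 0"
    and "\<And>j. j \<in> {k+1..l} \<Longrightarrow> R j *v w = 0"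
proof -
  let ?H = "shifted_cost y x c2"
  have psdRH: "psd (R i + ?H i)" and psdR: "psd (R i)" if "i \<in> {1..l}" for i
    using R[OF that] by (simp_all add: loewner_upper_bounds_def)
  define a1 where "a1 = (\<Sum>i=1..k. w \<bullet> ((R i + ?H i) *v w))"
  define a2 where "a2 = (\<Sum>j=k+1..l. w \<bullet> (R j *v w))"
  have unit: "w \<bullet> w = 1" using assms(2) by (simp add: norm_eq_1)
  have "w \<bullet> (P *v w) + (\<Sum>i=1..l. w \<bullet> (R i *v w)) = - mu"
    using quadratic_multiplier_decomposition[OF decomp, of w] unit by simp
  moreover have "a1 = (\<Sum>i=1..k. w \<bullet> (R i *v w)) + mu"
    unfolding a1_def mu using unit
    by (simp add: matrix_vector_mult_add_rdistrib inner_add_right sum.distrib quadratic_shifted_cost)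
  ultimately have "a1 + a2 + w \<bullet> (P *v w) = 0"
    unfolding a2_def using sum_atLeastAtMost_split[OF assms(1), of "\<lambda>i. w \<bullet> (R i *v w)"] by simp
  moreover have nonneg1: "\<forall>i\<in>{1..k}. 0 \<le> w \<bullet> ((R i + ?H i) *v w)"
    using psdRH assms(1) by (auto intro: psd_nonneg)
  moreover have nonneg2: "\<forall>j\<in>{k+1..l}. 0 \<le> w \<bullet> (R j *v w)"
    using psdR by (auto intro: psd_nonneg)
  moreover have "0 \<le> w \<bullet> (P *v w)" by (rule psd_nonneg[OF assms(3)])
  ultimately have "a1 = 0" "a2 = 0"
    unfolding a1_def a2_def using sum_nonneg[of _ "\<lambda>i. w \<bullet> ((R i + ?H i) *v w)"]
      sum_nonneg[of _ "\<lambda>i. w \<bullet> (R i *v w)"] by (smt (verit))+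
  show "(R i + ?H i) *v w = 0" if "i \<in> {1..k}" for i
  proof (rule psd_mult_eq_0_if_quadratic_eq_0)
    show "psd (R i + ?H i)" using psdRH that assms(1) by auto
    show "w \<bullet> ((R i + ?H i) *v w) = 0"
      using \<open>a1 = 0\<close> nonneg1 that unfolding a1_def by (subst (asm) sum_nonneg_eq_0_iff) auto
  qed
  show "R j *v w = 0" if "j \<in> {k+1..l}" for j
  proof (rule psd_mult_eq_0_if_quadratic_eq_0)
    show "psd (R j)" using psdR that by auto
    show "w \<bullet> (R j *v w) = 0"
      using \<open>a2 = 0\<close> nonneg2 that unfolding a2_def by (subst (asm) sum_nonneg_eq_0_iff) auto
  qed
qed

lemma dual_certificate_exists:
  assumes "k \<le> l" "norm w0 = 1"
    and bound: "\<And>W. sdr_feasible l W \<Longrightarrow> mu + (\<Sum>i=1..l. c2 i) \<le> relax_obj l y x c2 W"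
    and mu: "mu = (\<Sum>i=1..k. w0 \<bullet> (Qmat (y i) (x i) *v w0) - c2 i)"
  shows "\<exists>D. admissible_dual l D \<and>
       (\<forall>i\<in>{1..k}. (2 *\<^sub>R D 0 i + Qmat (y i) (x i) - c2 i *\<^sub>R mat 1) *v w0 = 0) \<and>
       (\<forall>j\<in>{k+1..l}. (2 *\<^sub>R D 0 j + c2 j *\<^sub>R mat 1 - Qmat (y j) (x j)) *v w0 = 0) \<and>
       (\<forall>z. 0 \<le> (\<Sum>a\<le>l. \<Sum>b\<le>l. z a \<bullet> (dual_slack l y x c2 mu D a b *v z b)))"
proof -
  let ?H = "shifted_cost y x c2"
  have "(- mu) *\<^sub>R mat 1 \<in> multiplier_sums ?H l"
    using shifted_cost_symmetric reduced_primal_bound[OF bound]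
    by (rule scaled_identity_in_multiplier_sums)
  then obtain P R where P: "psd P" and R: "\<forall>i\<in>{1..l}. R i \<in> loewner_upper_bounds (?H i)"
    and decomp: "(- mu) *\<^sub>R mat 1 = P + (\<Sum>i=1..l. R i)"
    using multiplier_sums_decompose by blast
  define D where "D = multiplier_dual ?H R"
  have "admissible_dual l D"
    unfolding D_def using R
    by (intro admissible_multiplier_dual) (simp add: shifted_cost_symmetric loewner_upper_bounds_def psd_symmetric)
  moreover have "(2 *\<^sub>R D 0 i + Qmat (y i) (x i) - c2 i *\<^sub>R mat 1) *v w0 = 0" if "i \<in> {1..k}" for i
  proof -
    have "2 *\<^sub>R D 0 i + Qmat (y i) (x i) - c2 i *\<^sub>R mat 1 = 2 *\<^sub>R (R i + ?H i)"
      using that by (simp add: D_def multiplier_dual_def shifted_cost_def vec_eq_iff algebra_simps)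
    then show ?thesis
      using multiplier_complementary_slackness(1)[OF assms(1,2) P _ decomp mu that] R
      by (simp add: scaleR_matrix_vector_assoc[symmetric])
  qed
  moreover have "(2 *\<^sub>R D 0 j + c2 j *\<^sub>R mat 1 - Qmat (y j) (x j)) *v w0 = 0" if "j \<in> {k+1..l}" for j
  proof -
    have "2 *\<^sub>R D 0 j + c2 j *\<^sub>R mat 1 - Qmat (y j) (x j) = 2 *\<^sub>R R j"
      using that by (simp add: D_def multiplier_dual_def shifted_cost_def algebra_simps)
    then show ?thesis
      using multiplier_complementary_slackness(2)[OF assms(1,2) P _ decomp mu that] R
      by (simp add: scaleR_matrix_vector_assoc[symmetric])
  qed
  moreover have "0 \<le> (\<Sum>a\<le>l. \<Sum>b\<le>l. z a \<bullet> (dual_slack l y x c2 mu D a b *v z b))" for z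
    unfolding D_def using R by (intro multiplier_dual_slack_nonneg[OF P _ decomp]) auto
  ultimately show ?thesis by blast
qed

lemma sdr_tight_iff_lower_bound:
  assumes "k \<le> l" and w0_min: "tls_global_min l y x c2 w0"
    and inliers: "\<forall>i\<in>{1..k}. w0 \<bullet> (Qmat (y i) (x i) *v w0) \<le> c2 i"
    and outliers: "\<forall>j\<in>{k+1..l}. w0 \<bullet> (Qmat (y j) (x j) *v w0) \<ge> c2 j"
  shows "sdr_tight l y x c2 \<longleftrightarrow> (\<forall>W. sdr_feasible l W \<longrightarrow>
    (\<Sum>i=1..k. w0 \<bullet> (Qmat (y i) (x i) *v w0) - c2 i) + (\<Sum>i=1..l. c2 i) \<le> relax_obj l y x c2 W)"
    (is "_ \<longleftrightarrow> (\<forall>W. _ \<longrightarrow> ?v \<le> _)")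
proof
  assume "sdr_tight l y x c2"
  then obtain om where om: "qcqp_feasible l om" "sdr_global_min l y x c2 (outer_blocks om)"
    by (auto simp: sdr_tight_def qcqp_global_min_def)
  have "tls_obj l y x c2 w0 \<le> tls_obj l y x c2 (om 0)"
    using w0_min qcqp_feasibleD(1)[OF om(1)] by (simp add: tls_global_min_def)
  then have "?v \<le> relax_obj l y x c2 (outer_blocks om)"
    using tls_obj_le_relax_obj[OF om(1), of y x c2] tls_obj_inliers_outliers[OF assms(1) inliers outliers]
    by linarith
  with om(2) show "\<forall>W. sdr_feasible l W \<longrightarrow> ?v \<le> relax_obj l y x c2 W"
    by (auto simp: sdr_global_min_def)
next
  assume bound: "\<forall>W. sdr_feasible l W \<longrightarrow> ?v \<le> relax_obj l y x c2 W"
  have unit: "norm w0 = 1" using w0_min by (simp add: tls_global_min_def)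
  have "qcqp_global_min l y x c2 (inlier_lift k w0)"
    using qcqp_feasible_inlier_lift[OF unit] bound sdr_feasible_outer_blocks
      relax_obj_inlier_lift[OF assms(1) unit]
    by (simp add: qcqp_global_min_def)
  moreover have "sdr_global_min l y x c2 (outer_blocks (inlier_lift k w0))"
    using sdr_feasible_outer_blocks[OF qcqp_feasible_inlier_lift[OF unit]] bound
      relax_obj_inlier_lift[OF assms(1) unit]
    by (simp add: sdr_global_min_def)
  ultimately show "sdr_tight l y x c2" by (auto simp: sdr_tight_def)
qed

lemma lower_bound_iff_dual_certificate:
  assumes "k \<le> l" "norm w0 = 1" and mu: "mu = (\<Sum>i=1..k. w0 \<bullet> (Qmat (y i) (x i) *v w0) - c2 i)"
  shows "(\<forall>W. sdr_feasible l W \<longrightarrow> mu + (\<Sum>i=1..l. c2 i) \<le> relax_obj l y x c2 W) \<longleftrightarrow>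
    (\<exists>D. admissible_dual l D \<and>
       (\<forall>i\<in>{1..k}. (2 *\<^sub>R D 0 i + Qmat (y i) (x i) - c2 i *\<^sub>R mat 1) *v w0 = 0) \<and>
       (\<forall>j\<in>{k+1..l}. (2 *\<^sub>R D 0 j + c2 j *\<^sub>R mat 1 - Qmat (y j) (x j)) *v w0 = 0) \<and>
       (\<forall>z :: nat \<Rightarrow> real^4.
          - mu * (norm (z 0))^2 + 2 * (\<Sum>i=1..l. z i \<bullet> (D 0 i *v z i))
          - (\<Sum>i=1..l. z 0 \<bullet> ((2 *\<^sub>R D 0 i - Qmat (y i) (x i) + c2 i *\<^sub>R mat 1) *v z i)) \<ge> 0))"
    (is "?bound \<longleftrightarrow> ?certificate")
proof
  assume ?bound
  then obtain D where "admissible_dual l D"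
    "\<forall>i\<in>{1..k}. (2 *\<^sub>R D 0 i + Qmat (y i) (x i) - c2 i *\<^sub>R mat 1) *v w0 = 0"
    "\<forall>j\<in>{k+1..l}. (2 *\<^sub>R D 0 j + c2 j *\<^sub>R mat 1 - Qmat (y j) (x j)) *v w0 = 0"
    "\<forall>z. 0 \<le> (\<Sum>a\<le>l. \<Sum>b\<le>l. z a \<bullet> (dual_slack l y x c2 mu D a b *v z b))"
    using dual_certificate_exists[OF assms(1,2) _ mu] by blast
  then show ?certificate by (intro exI[of _ D]) (simp add: dual_slack_quadratic_form)
next
  assume ?certificate
  then obtain D where adm: "admissible_dual l D"
    and "\<forall>z :: nat \<Rightarrow> real^4.
          - mu * (norm (z 0))^2 + 2 * (\<Sum>i=1..l. z i \<bullet> (D 0 i *v z i))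
          - (\<Sum>i=1..l. z 0 \<bullet> ((2 *\<^sub>R D 0 i - Qmat (y i) (x i) + c2 i *\<^sub>R mat 1) *v z i)) \<ge> 0"
    by blast
  then show ?bound
    using relax_obj_lower_bound[OF adm] by (simp add: dual_slack_quadratic_form[OF adm])
qed

theorem proposition2p5:
  fixes l k :: nat and y x :: "nat \<Rightarrow> real^3" and c2 :: "nat \<Rightarrow> real" and w0 :: "real^4"
  assumes c2_nonneg: "\<forall>i\<in>{1..l}. c2 i \<ge> 0"
    and k_le: "k \<le> l"
    and w0_min: "tls_global_min l y x c2 w0"
    and inliers: "\<forall>i\<in>{1..k}. w0 \<bullet> (Qmat (y i) (x i) *v w0) \<le> c2 i"
    and outliers: "\<forall>j\<in>{k+1..l}. w0 \<bullet> (Qmat (y j) (x j) *v w0) \<ge> c2 j"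
  shows "sdr_tight l y x c2 \<longleftrightarrow>
    (\<exists>(mu::real) D. admissible_dual l D \<and>
       (\<forall>i\<in>{1..k}. (2 *\<^sub>R D 0 i + Qmat (y i) (x i) - c2 i *\<^sub>R mat 1) *v w0 = 0) \<and>
       (\<forall>j\<in>{k+1..l}. (2 *\<^sub>R D 0 j + c2 j *\<^sub>R mat 1 - Qmat (y j) (x j)) *v w0 = 0) \<and>
       (\<forall>z :: nat \<Rightarrow> real^4.
          - mu * (norm (z 0))^2 + 2 * (\<Sum>i=1..l. z i \<bullet> (D 0 i *v z i))
          - (\<Sum>i=1..l. z 0 \<bullet> ((2 *\<^sub>R D 0 i - Qmat (y i) (x i) + c2 i *\<^sub>R mat 1) *v z i)) \<ge> 0) \<and>
       mu = (\<Sum>i=1..k. w0 \<bullet> (Qmat (y i) (x i) *v w0) - c2 i))"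
proof -
  have "norm w0 = 1" using w0_min by (simp add: tls_global_min_def)
  then show ?thesis
    using sdr_tight_iff_lower_bound[OF k_le w0_min inliers outliers]
      lower_bound_iff_dual_certificate[OF k_le _ refl]
    by simp
qed

end
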